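(* Let $A\in\mathbb R^{m\times n}$ and $p\in\mathbb Q\cap(2,\infty)$. Then $\|A\|_{p_*}=\max\{\langle A,Z\rangle:\|Z\|_{p_\sigma}\le1\}$ and $\|A\|_{p_u}:=\max\{\langle A,Z\rangle:\|Z\|_{p_v}\le1\}$ satisfy $\|A\|_{p_u}\le\|A\|_{p_*}\le\delta_G\|A\|_{p_u}$.
   Context: Matrix spectral $p$-norm $\|Z\|_{p_\sigma}=\max\{\boldsymbol x^{\mathrm T}Z\boldsymbol y:\|\boldsymbol x\|_p=\|\boldsymbol y\|_p=1\}$; matrix nuclear $p$-norm $\|A\|_{p_*}=\min\{\sum|\lambda_i|:A=\sum\lambda_i\boldsymbol x_i\boldsymbol y_i^{\mathrm T},\ \|\boldsymbol x_i\|_p=\|\boldsymbol y_i\|_p=1\}$. $\|Z\|_{p_v}=\max\{\langle\begin{pmatrix}O&Z/2\\Z^{\mathrm T}/2&O\end{pmatrix},X\rangle:\sum_{i\le m}|x_{ii}|^{p/2}\le1,\ \sum_{i>m}|x_{ii}|^{p/2}\le1,\ X\succeq O\}$. $\delta_G$ is the real Grothendieck constant. *)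

theory Defs
  imports "HOL-Analysis.Analysis"
begin

text \<open>Vectors in R^k are functions nat => real (only indices < k matter);
  m x n matrices are functions nat => nat => real (only indices i < m, j < n matter).\<close>

definition vec_pnorm :: "real \<Rightarrow> nat \<Rightarrow> (nat \<Rightarrow> real) \<Rightarrow> real" where
  "vec_pnorm p k x = (\<Sum>i<k. \<bar>x i\<bar> powr p) powr (1 / p)"

definition mat_inner :: "nat \<Rightarrow> nat \<Rightarrow> (nat \<Rightarrow> nat \<Rightarrow> real) \<Rightarrow> (nat \<Rightarrow> nat \<Rightarrow> real) \<Rightarrow> real" where
  "mat_inner m n A Z = (\<Sum>i<m. \<Sum>j<n. A i j * Z i j)"

definition spectral_pnorm :: "real \<Rightarrow> nat \<Rightarrow> nat \<Rightarrow> (nat \<Rightarrow> nat \<Rightarrow> real) \<Rightarrow> real" where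
  "spectral_pnorm p m n Z = Sup {(\<Sum>i<m. \<Sum>j<n. x i * Z i j * y j) | x y.
       vec_pnorm p m x = 1 \<and> vec_pnorm p n y = 1}"

definition nuclear_pnorm :: "real \<Rightarrow> nat \<Rightarrow> nat \<Rightarrow> (nat \<Rightarrow> nat \<Rightarrow> real) \<Rightarrow> real" where
  "nuclear_pnorm p m n A = Inf {(\<Sum>k<r. \<bar>lam k\<bar>) | (r::nat) lam xs ys.
       (\<forall>k<r. vec_pnorm p m (xs k) = 1 \<and> vec_pnorm p n (ys k) = 1) \<and>
       (\<forall>i<m. \<forall>j<n. A i j = (\<Sum>k<r. lam k * xs k i * ys k j))}"

definition psd :: "nat \<Rightarrow> (nat \<Rightarrow> nat \<Rightarrow> real) \<Rightarrow> bool" where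
  "psd N X \<longleftrightarrow> (\<forall>i<N. \<forall>j<N. X i j = X j i) \<and>
     (\<forall>x. (\<Sum>i<N. \<Sum>j<N. x i * X i j * x j) \<ge> 0)"

text \<open>The norm \<open>\<parallel>Z\<parallel>_{p_v}\<close>: X is (m+n) x (m+n), indices < m form the first block,
  indices m..m+n-1 the second; the inner product with the block matrix
  [[O, Z/2],[Z^T/2, O]] is written out literally.\<close>
definition pv_norm :: "real \<Rightarrow> nat \<Rightarrow> nat \<Rightarrow> (nat \<Rightarrow> nat \<Rightarrow> real) \<Rightarrow> real" where
  "pv_norm p m n Z = Sup {(\<Sum>i<m. \<Sum>j<n. Z i j / 2 * X i (m + j))
                         + (\<Sum>j<n. \<Sum>i<m. Z i j / 2 * X (m + j) i) | X.
       psd (m + n) X \<and>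
       (\<Sum>i<m. \<bar>X i i\<bar> powr (p / 2)) \<le> 1 \<and>
       (\<Sum>j<n. \<bar>X (m + j) (m + j)\<bar> powr (p / 2)) \<le> 1}"

definition pu_norm :: "real \<Rightarrow> nat \<Rightarrow> nat \<Rightarrow> (nat \<Rightarrow> nat \<Rightarrow> real) \<Rightarrow> real" where
  "pu_norm p m n A = Sup {mat_inner m n A Z | Z. pv_norm p m n Z \<le> 1}"

definition grothendieck_const :: real where
  "grothendieck_const = Inf {K. \<forall>(m::nat) (n::nat) (d::nat) (a::nat \<Rightarrow> nat \<Rightarrow> real)
        (u::nat \<Rightarrow> nat \<Rightarrow> real) (v::nat \<Rightarrow> nat \<Rightarrow> real).
      (\<forall>i<m. (\<Sum>k<d. (u i k)\<^sup>2) = 1) \<and> (\<forall>j<n. (\<Sum>k<d. (v j k)\<^sup>2) = 1) \<longrightarrow>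
      (\<Sum>i<m. \<Sum>j<n. a i j * (\<Sum>k<d. u i k * v j k))
        \<le> K * Sup {(\<Sum>i<m. \<Sum>j<n. a i j * e i * f j) | e f.
                    (\<forall>i<m. e i \<in> {-1, 1}) \<and> (\<forall>j<n. f j \<in> {-1, 1})}}"

end

(*
  The nuclear p-norm is sublinear, so Hahn-Banach on the span of A and the matrix units gives
  a linear functional dominated by it with value \<parallel>A\<parallel>_{p*} at A. Its values on the matrix units
  form a matrix Z of spectral p-norm at most 1 pairing with A to \<parallel>A\<parallel>_{p*}, while pairing any
  rank-one decomposition of A with such a Z shows that no Z does better.

  Taking X = w w^T with w = (x, y) shows that the p_v norm dominates the spectral p-norm, hence
  \<parallel>A\<parallel>_{p_u} \<le> \<parallel>A\<parallel>_{p*}. Conversely, a feasible X is a Gram matrix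
  X_ij = r_i r_j <w_i, w_j> of unit vectors with weights r of p-norm at most 1, so every constant K
  in Grothendieck's inequality gives \<parallel>Z\<parallel>_{p_v} \<le> K \<parallel>Z\<parallel>_{p_sigma}; scaling the norming Z by 1/K then
  yields \<parallel>A\<parallel>_{p*} \<le> K \<parallel>A\<parallel>_{p_u}. Passing to the infimum over K requires some admissible K to
  exist: averaging over Rademacher signs, clipping at level 8 and Khintchine's fourth-moment
  bound show that K = 128 is admissible.
*)
theory Submission
  imports Defs "HOL-Library.Function_Algebras"
begin

section \<open>Hahn--Banach extension on finite-dimensional spans\<close>

text \<open>Pointwise scaling makes the matrices \<open>nat \<Rightarrow> nat \<Rightarrow> real\<close> a real vector space, so that
  the library notions \<open>span\<close> and \<open>subspace\<close> apply to them.\<close>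
instantiation "fun" :: (type, real_vector) real_vector
begin

definition scaleR_fun :: "real \<Rightarrow> ('a \<Rightarrow> 'b) \<Rightarrow> 'a \<Rightarrow> 'b" where
  "scaleR_fun r f = (\<lambda>x. r *\<^sub>R f x)"

instance by standard (auto simp: scaleR_fun_def fun_eq_iff algebra_simps)

end

lemma scaleR_fun_apply [simp]: "(r *\<^sub>R f) x = r *\<^sub>R f x"
  by (simp add: scaleR_fun_def)

definition sublinear :: "('v::real_vector \<Rightarrow> real) \<Rightarrow> bool" where
  "sublinear N \<longleftrightarrow> (\<forall>x y. N (x + y) \<le> N x + N y) \<and> (\<forall>c x. c > 0 \<longrightarrow> N (c *\<^sub>R x) = c * N x)"

definition linear_on :: "'v::real_vector set \<Rightarrow> ('v \<Rightarrow> real) \<Rightarrow> bool" where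
  "linear_on W g \<longleftrightarrow>
     (\<forall>x\<in>W. \<forall>y\<in>W. g (x + y) = g x + g y) \<and> (\<forall>x\<in>W. \<forall>c. g (c *\<^sub>R x) = c * g x)"

lemma linear_on_sum:
  assumes "linear_on W g" "subspace W" "finite S" "\<And>i. i \<in> S \<Longrightarrow> f i \<in> W"
  shows "g (sum f S) = (\<Sum>i\<in>S. g (f i))"
  using assms(3,4)
proof (induction S rule: finite_induct)
  case empty
  have "g (0 *\<^sub>R 0) = 0 * g 0"
    using assms(1,2) unfolding linear_on_def by (meson subspace_0)
  then show ?case by simp
next
  case (insert a S)
  then have "sum f S \<in> W" using assms(2) by (simp add: subspace_sum)
  then show ?case using insert assms(1) unfolding linear_on_def by simp
qed

lemma span_insert_subspace:
  assumes "subspace W"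
  shows "span (insert e W) = {w + t *\<^sub>R e | w t. w \<in> W}"
proof -
  have "span W = W" using assms by (simp add: span_eq_iff)
  then have "span (insert e W) = {x. \<exists>t. x - t *\<^sub>R e \<in> W}" by (simp only: span_insert)
  also have "\<dots> = {w + t *\<^sub>R e | w t. w \<in> W}"
  proof (intro set_eqI iffI)
    fix x assume "x \<in> {x. \<exists>t. x - t *\<^sub>R e \<in> W}"
    then obtain t where "x - t *\<^sub>R e \<in> W" by blast
    then show "x \<in> {w + t *\<^sub>R e | w t. w \<in> W}" by (intro CollectI exI[of _ "x - t *\<^sub>R e"]) auto
  next
    fix x assume "x \<in> {w + t *\<^sub>R e | w t. w \<in> W}"
    then obtain w t where "w \<in> W" "x = w + t *\<^sub>R e" by blast
    then show "x \<in> {x. \<exists>t. x - t *\<^sub>R e \<in> W}" by (intro CollectI exI[of _ t]) simp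
  qed
  finally show ?thesis .
qed

lemma subspace_insert_decomp_unique:
  assumes "subspace W" "e \<notin> W" "w1 \<in> W" "w2 \<in> W" "w1 + t1 *\<^sub>R e = w2 + t2 *\<^sub>R e"
  shows "w1 = w2 \<and> t1 = t2"
proof (rule ccontr)
  assume "\<not> (w1 = w2 \<and> t1 = t2)"
  with assms(5) have "t1 \<noteq> t2" by auto
  from assms(5) have "(t1 - t2) *\<^sub>R e = w2 - w1" by (simp add: algebra_simps)
  then have "(1 / (t1 - t2)) *\<^sub>R ((t1 - t2) *\<^sub>R e) = (1 / (t1 - t2)) *\<^sub>R (w2 - w1)" by simp
  then have "e = (1 / (t1 - t2)) *\<^sub>R (w2 - w1)" using \<open>t1 \<noteq> t2\<close> by simp
  then have "e \<in> W" using assms(1,3,4) by (simp add: subspace_diff subspace_scale)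
  with assms(2) show False ..
qed

definition extend_linear :: "'v::real_vector set \<Rightarrow> ('v \<Rightarrow> real) \<Rightarrow> 'v \<Rightarrow> real \<Rightarrow> 'v \<Rightarrow> real"
  where "extend_linear W g e c v = (THE r. \<exists>w t. w \<in> W \<and> v = w + t *\<^sub>R e \<and> r = g w + t * c)"

lemma extend_linear_apply:
  assumes "subspace W" "e \<notin> W" "w \<in> W"
  shows "extend_linear W g e c (w + t *\<^sub>R e) = g w + t * c"
  unfolding extend_linear_def
  by (rule the_equality) (use assms subspace_insert_decomp_unique[OF assms(1,2)] in \<open>blast, metis\<close>)

lemma linear_on_extend_linear:
  assumes W: "subspace W" and e: "e \<notin> W" and g: "linear_on W g"
  shows "linear_on (span (insert e W)) (extend_linear W g e c)"
  unfolding linear_on_def span_insert_subspace[OF W]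
proof (intro conjI ballI allI, goal_cases)
  case (1 x y)
  then obtain w1 t1 w2 t2 where *: "w1 \<in> W" "w2 \<in> W" "x = w1 + t1 *\<^sub>R e" "y = w2 + t2 *\<^sub>R e"
    by blast
  then have eq: "x + y = (w1 + w2) + (t1 + t2) *\<^sub>R e" by (simp add: algebra_simps)
  have "extend_linear W g e c (x + y) = g (w1 + w2) + (t1 + t2) * c"
    unfolding eq by (rule extend_linear_apply[OF W e]) (use W * in \<open>simp add: subspace_add\<close>)
  with * W g show ?case
    by (simp add: extend_linear_apply[OF W e] linear_on_def distrib_right)
next
  case (2 x r)
  then obtain w t where *: "w \<in> W" "x = w + t *\<^sub>R e" by blast
  then have eq: "r *\<^sub>R x = r *\<^sub>R w + (r * t) *\<^sub>R e" by (simp add: algebra_simps)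
  have "extend_linear W g e c (r *\<^sub>R x) = g (r *\<^sub>R w) + (r * t) * c"
    unfolding eq by (rule extend_linear_apply[OF W e]) (use W * in \<open>simp add: subspace_scale\<close>)
  with * W g show ?case
    by (simp add: extend_linear_apply[OF W e] linear_on_def distrib_left)
qed

text \<open>The extension stays below \<open>N\<close> as soon as its value \<open>c\<close> on \<open>e\<close> lies between
  \<open>g w - N (w - e)\<close> and \<open>N (w + e) - g w\<close> for all \<open>w \<in> W\<close>: scale \<open>w + t e\<close> by \<open>1 / \<bar>t\<bar>\<close>.\<close>
lemma extend_linear_le:
  assumes N: "sublinear N" and W: "subspace W" and e: "e \<notin> W" and g: "linear_on W g"
    and le: "\<And>w. w \<in> W \<Longrightarrow> g w \<le> N w"
    and c_lower: "\<And>w. w \<in> W \<Longrightarrow> g w - N (w - e) \<le> c"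
    and c_upper: "\<And>w. w \<in> W \<Longrightarrow> c \<le> N (w + e) - g w"
    and x: "x \<in> span (insert e W)"
  shows "extend_linear W g e c x \<le> N x"
proof -
  have hom: "r > 0 \<Longrightarrow> N (r *\<^sub>R v) = r * N v" for r v using N unfolding sublinear_def by auto
  have gscale: "w \<in> W \<Longrightarrow> g (r *\<^sub>R w) = r * g w" for r w using g unfolding linear_on_def by auto
  obtain w t where w: "w \<in> W" and x_eq: "x = w + t *\<^sub>R e"
    using x unfolding span_insert_subspace[OF W] by blast
  have "g w + t * c \<le> N (w + t *\<^sub>R e)"
  proof (cases t "0 :: real" rule: linorder_cases)
    case greater
    have "t * c \<le> t * (N ((1/t) *\<^sub>R w + e) - g ((1/t) *\<^sub>R w))"
      using c_upper greater W w by (simp add: subspace_scale)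
    also have "\<dots> = N (t *\<^sub>R ((1/t) *\<^sub>R w + e)) - g w"
      using greater hom gscale w by (simp add: right_diff_distrib)
    also have "t *\<^sub>R ((1/t) *\<^sub>R w + e) = w + t *\<^sub>R e"
      using greater by (simp add: algebra_simps)
    finally show ?thesis by simp
  next
    case less
    define s where "s = - t"
    have s: "s > 0" using less by (simp add: s_def)
    have "s * (g ((1/s) *\<^sub>R w) - N ((1/s) *\<^sub>R w - e)) \<le> s * c"
      using c_lower s W w by (simp add: subspace_scale)
    moreover have "s * (g ((1/s) *\<^sub>R w) - N ((1/s) *\<^sub>R w - e)) = g w - N (s *\<^sub>R ((1/s) *\<^sub>R w - e))"
      using s hom gscale w by (simp add: right_diff_distrib)
    moreover have "s *\<^sub>R ((1/s) *\<^sub>R w - e) = w + t *\<^sub>R e"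
      using s by (simp add: s_def algebra_simps)
    ultimately show ?thesis by (simp add: s_def)
  qed (use le w in simp)
  then show ?thesis using extend_linear_apply[OF W e w] x_eq by simp
qed

lemma hahn_banach_extension_step:
  assumes N: "sublinear N" and W: "subspace W" and g: "linear_on W g"
    and le: "\<And>x. x \<in> W \<Longrightarrow> g x \<le> N x"
  shows "\<exists>h. (\<forall>x\<in>W. h x = g x) \<and> linear_on (span (insert e W)) h
            \<and> (\<forall>x\<in>span (insert e W). h x \<le> N x)"
proof (cases "e \<in> W")
  case True
  then have "span (insert e W) = W"
    using W by (simp add: span_eq_iff insert_absorb)
  then show ?thesis using g le by auto
next
  case False
  have interval: "g w1 - N (w1 - e) \<le> N (w2 + e) - g w2" if "w1 \<in> W" "w2 \<in> W" for w1 w2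
  proof -
    have "g w1 + g w2 = g (w1 + w2)" using g that unfolding linear_on_def by simp
    also have "\<dots> \<le> N (w1 + w2)" using le that W by (simp add: subspace_add)
    also have "\<dots> = N ((w1 - e) + (w2 + e))" by (simp add: algebra_simps)
    also have "\<dots> \<le> N (w1 - e) + N (w2 + e)" using N unfolding sublinear_def by blast
    finally show ?thesis by simp
  qed
  define L where "L = {g w - N (w - e) | w. w \<in> W}"
  have "L \<noteq> {}" using W subspace_0 unfolding L_def by blast
  have "bdd_above L" unfolding L_def bdd_above_def using interval W subspace_0 by blast
  have "g w - N (w - e) \<le> Sup L" "Sup L \<le> N (w + e) - g w" if "w \<in> W" for w
    using that \<open>bdd_above L\<close> \<open>L \<noteq> {}\<close> interval
    by (auto intro!: cSup_upper cSup_least simp: L_def)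
  moreover have "extend_linear W g e (Sup L) x = g x" if "x \<in> W" for x
    using extend_linear_apply[OF W False that, of g "Sup L" 0] by simp
  ultimately show ?thesis
    using extend_linear_le[OF N W False g le] linear_on_extend_linear[OF W False g]
    by (intro exI[of _ "extend_linear W g e (Sup L)"]) auto
qed

lemma hahn_banach_span:
  fixes N :: "'v::real_vector \<Rightarrow> real"
  assumes N: "sublinear N" and B: "finite B"
  shows "\<exists>g. linear_on (span (insert a B)) g \<and> (\<forall>x\<in>span (insert a B). g x \<le> N x) \<and> g a = N a"
  using B
proof (induction B rule: finite_induct)
  case empty
  have sub: "N (x + y) \<le> N x + N y" and hom: "r > 0 \<Longrightarrow> N (r *\<^sub>R x) = r * N x" for x y r
    using N unfolding sublinear_def by auto
  have N0: "N 0 = 0" using hom[of 2 0] by simp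
  have span_a: "span (insert a {}) = span (insert a {0})" by (simp add: insert_commute)
  show ?case
  proof (cases "a = 0")
    case True
    then show ?thesis by (intro exI[of _ "\<lambda>_. 0"]) (simp add: linear_on_def N0)
  next
    case False
    then have a: "a \<notin> {0}" by simp
    have "0 \<le> N a + N (- a)" using sub[of a "- a"] N0 by simp
    then show ?thesis
      unfolding span_a
      using extend_linear_le[OF N subspace_single_0 a, of "\<lambda>_. 0" "N a"]
        linear_on_extend_linear[OF subspace_single_0 a, of "\<lambda>_. 0" "N a"]
        extend_linear_apply[OF subspace_single_0 a, of 0 "\<lambda>_. 0" "N a" 1]
      by (intro exI[of _ "extend_linear {0} (\<lambda>_. 0) a (N a)"]) (auto simp: linear_on_def N0)
  qed
next
  case (insert b B)
  then obtain g where g: "linear_on (span (insert a B)) g" "\<forall>x\<in>span (insert a B). g x \<le> N x"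
    "g a = N a"
    by blast
  obtain h where h: "\<forall>x\<in>span (insert a B). h x = g x" "linear_on (span (insert b (span (insert a B)))) h"
    "\<forall>x\<in>span (insert b (span (insert a B))). h x \<le> N x"
    using hahn_banach_extension_step[OF N subspace_span g(1)] g(2) by blast
  have "span (insert b (span (insert a B))) = span (insert a (insert b B))"
    by (simp add: span_insert[of b] insert_commute[of a b] span_span)
  moreover have "a \<in> span (insert a B)" by (simp add: span_base)
  ultimately show ?case using h g(3) by auto
qed

section \<open>Vector \<open>p\<close>-norms and the nuclear \<open>p\<close>-norm\<close>

lemma vec_pnorm_nonneg: "vec_pnorm p k x \<ge> 0"
  unfolding vec_pnorm_def by simp

lemma vec_pnorm_uminus [simp]: "vec_pnorm p k (\<lambda>i. - x i) = vec_pnorm p k x"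
  by (simp add: vec_pnorm_def)

lemma sum_abs_powr_eq_one:
  assumes "vec_pnorm p k x = 1" "p > 0"
  shows "(\<Sum>i<k. \<bar>x i\<bar> powr p) = 1"
proof -
  have "((\<Sum>i<k. \<bar>x i\<bar> powr p) powr (1/p)) powr p = 1"
    using assms unfolding vec_pnorm_def by simp
  then show ?thesis using assms(2) by (simp add: powr_powr sum_nonneg)
qed

lemma abs_le_one_if_vec_pnorm_eq_one:
  assumes "vec_pnorm p k x = 1" "p > 0" "i < k"
  shows "\<bar>x i\<bar> \<le> 1"
proof (rule ccontr)
  assume "\<not> \<bar>x i\<bar> \<le> 1"
  then have "1 powr p < \<bar>x i\<bar> powr p" using assms(2) by (intro powr_less_mono2) auto
  then have "1 < \<bar>x i\<bar> powr p" by simp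
  also have "\<bar>x i\<bar> powr p \<le> (\<Sum>i<k. \<bar>x i\<bar> powr p)"
    using assms(3) by (intro member_le_sum) auto
  finally show False using sum_abs_powr_eq_one[OF assms(1,2)] by simp
qed

lemma vec_pnorm_unit_vector:
  assumes "a < k"
  shows "vec_pnorm p k (\<lambda>i. if i = a then 1 else 0) = 1"
proof -
  have "(\<Sum>i<k. \<bar>if i = a then 1 else 0::real\<bar> powr p) = (\<Sum>i<k. if i = a then 1 else 0)"
    by (intro sum.cong) auto
  with assms show ?thesis unfolding vec_pnorm_def by simp
qed

lemma vec_pnorm_eq_0D:
  assumes "vec_pnorm p k x = 0" "i < k"
  shows "x i = 0"
proof -
  have "(\<Sum>i<k. \<bar>x i\<bar> powr p) = 0" using assms(1) unfolding vec_pnorm_def by simp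
  then have "\<forall>i\<in>{..<k}. \<bar>x i\<bar> powr p = 0" by (subst sum_nonneg_eq_0_iff[symmetric]) auto
  then show ?thesis using assms(2) by simp
qed

lemma vec_pnorm_divide:
  assumes "c > 0" "p > 0"
  shows "vec_pnorm p k (\<lambda>i. x i / c) = vec_pnorm p k x / c"
proof -
  have "vec_pnorm p k (\<lambda>i. x i / c) = ((\<Sum>i<k. \<bar>x i\<bar> powr p) / c powr p) powr (1 / p)"
    using assms unfolding vec_pnorm_def by (simp add: powr_divide sum_divide_distrib)
  also have "\<dots> = vec_pnorm p k x / (c powr p) powr (1/p)"
    unfolding vec_pnorm_def by (rule powr_divide)
  finally show ?thesis using assms by (simp add: powr_powr)
qed

lemma vec_pnorm_le_one:
  assumes "p > 0" "(\<Sum>i<k. \<bar>x i\<bar> powr p) \<le> 1"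
  shows "vec_pnorm p k x \<le> 1"
  using powr_mono2[of "1 / p" _ 1] assms unfolding vec_pnorm_def by (simp add: sum_nonneg)

lemma vec_pnorm_mult_sign:
  assumes "\<And>i. i < k \<Longrightarrow> \<bar>e i\<bar> = 1"
  shows "vec_pnorm p k (\<lambda>i. x i * e i) = vec_pnorm p k x"
  unfolding vec_pnorm_def using assms by (simp add: abs_mult)

lemma sqrt_powr: "0 \<le> x \<Longrightarrow> sqrt x powr p = x powr (p / 2)"
  by (simp add: powr_half_sqrt[symmetric] powr_powr)

definition nuclear_decomp :: "real \<Rightarrow> nat \<Rightarrow> nat \<Rightarrow> (nat \<Rightarrow> nat \<Rightarrow> real) \<Rightarrow> nat \<Rightarrow> (nat \<Rightarrow> real)
    \<Rightarrow> (nat \<Rightarrow> nat \<Rightarrow> real) \<Rightarrow> (nat \<Rightarrow> nat \<Rightarrow> real) \<Rightarrow> bool" where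
  "nuclear_decomp p m n A r lam xs ys \<longleftrightarrow>
     (\<forall>k<r. vec_pnorm p m (xs k) = 1 \<and> vec_pnorm p n (ys k) = 1) \<and>
     (\<forall>i<m. \<forall>j<n. A i j = (\<Sum>k<r. lam k * xs k i * ys k j))"

lemma nuclear_decomp_entries:
  assumes "0 < n"
  shows "nuclear_decomp p m n A (m * n) (\<lambda>k. A (k div n) (k mod n))
           (\<lambda>k i. if i = k div n then 1 else 0) (\<lambda>k j. if j = k mod n then 1 else 0)"
  unfolding nuclear_decomp_def
proof (intro conjI allI impI)
  fix k assume "k < m * n"
  then show "vec_pnorm p m (\<lambda>i. if i = k div n then 1 else 0) = 1"
    by (intro vec_pnorm_unit_vector) (simp add: less_mult_imp_div_less)
  show "vec_pnorm p n (\<lambda>j. if j = k mod n then 1 else 0) = 1"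
    using assms by (intro vec_pnorm_unit_vector) simp
next
  fix i j assume ij: "i < m" "j < n"
  have idx: "(i = k div n \<and> j = k mod n) \<longleftrightarrow> k = i * n + j" for k
    using ij div_mult_mod_eq[of k n] by auto
  have "(i + 1) * n \<le> m * n" using ij by (intro mult_right_mono) auto
  then have "i * n + j < m * n" using ij by simp
  then have "(\<Sum>k<m * n. if k = i * n + j then A i j else 0) = A i j" by simp
  moreover have "(\<Sum>k<m * n. A (k div n) (k mod n) * (if i = k div n then 1 else 0)
        * (if j = k mod n then 1 else 0)) = (\<Sum>k<m * n. if k = i * n + j then A i j else 0)"
    using idx by (intro sum.cong) auto
  ultimately show "A i j = (\<Sum>k<m * n. A (k div n) (k mod n) * (if i = k div n then 1 else 0)
        * (if j = k mod n then 1 else 0))" by simp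
qed

lemma nuclear_pnorm_eq_Inf_decomp:
  "nuclear_pnorm p m n A = Inf {(\<Sum>k<r. \<bar>lam k\<bar>) | r lam xs ys. nuclear_decomp p m n A r lam xs ys}"
  unfolding nuclear_pnorm_def nuclear_decomp_def ..

lemma nuclear_pnorm_le:
  assumes "nuclear_decomp p m n A r lam xs ys"
  shows "nuclear_pnorm p m n A \<le> (\<Sum>k<r. \<bar>lam k\<bar>)"
  unfolding nuclear_pnorm_eq_Inf_decomp using assms
  by (intro cInf_lower) (auto intro!: bdd_belowI[of _ 0] sum_nonneg)

lemma nuclear_pnorm_greatest:
  assumes "0 < n" "\<And>r lam xs ys. nuclear_decomp p m n A r lam xs ys \<Longrightarrow> c \<le> (\<Sum>k<r. \<bar>lam k\<bar>)"
  shows "c \<le> nuclear_pnorm p m n A"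
  unfolding nuclear_pnorm_eq_Inf_decomp
  using nuclear_decomp_entries[OF assms(1)] assms(2) by (intro cInf_greatest) blast+

lemma nuclear_pnorm_nonneg: "0 < n \<Longrightarrow> nuclear_pnorm p m n A \<ge> 0"
  by (rule nuclear_pnorm_greatest) (auto intro: sum_nonneg)

lemma nuclear_pnorm_cong:
  assumes "\<And>i j. i < m \<Longrightarrow> j < n \<Longrightarrow> A i j = B i j"
  shows "nuclear_pnorm p m n A = nuclear_pnorm p m n B"
  unfolding nuclear_pnorm_def by (simp add: assms)

lemma nuclear_pnorm_rank_one:
  assumes "vec_pnorm p m x = 1" "vec_pnorm p n y = 1" "\<And>i j. i < m \<Longrightarrow> j < n \<Longrightarrow> A i j = x i * y j"
  shows "nuclear_pnorm p m n A \<le> 1"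
  using nuclear_pnorm_le[of p m n A 1 "\<lambda>_. 1" "\<lambda>_. x" "\<lambda>_. y"] assms
  by (simp add: nuclear_decomp_def)

lemma nuclear_pnorm_add:
  assumes "0 < n"
  shows "nuclear_pnorm p m n (A + B) \<le> nuclear_pnorm p m n A + nuclear_pnorm p m n B"
proof -
  have "nuclear_pnorm p m n (A + B) \<le> (\<Sum>k<r1. \<bar>l1 k\<bar>) + (\<Sum>k<r2. \<bar>l2 k\<bar>)"
    if d1: "nuclear_decomp p m n A r1 l1 x1 y1" and d2: "nuclear_decomp p m n B r2 l2 x2 y2"
    for r1 l1 x1 y1 r2 l2 x2 y2
  proof -
    let ?cat = "\<lambda>f g k. if k < r1 then f k else g (k - r1)"
    have sum_cat: "(\<Sum>k<r1 + r2. F k) = (\<Sum>k<r1. F k) + (\<Sum>k<r2. F (r1 + k))" for F :: "nat \<Rightarrow> real"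
      by (induction r2) (simp_all add: add.assoc)
    have "nuclear_decomp p m n (A + B) (r1 + r2) (?cat l1 l2) (?cat x1 x2) (?cat y1 y2)"
      using d1 d2 unfolding nuclear_decomp_def
      by (auto simp: sum_cat)
    from nuclear_pnorm_le[OF this] show ?thesis by (simp add: sum_cat)
  qed
  then have "nuclear_pnorm p m n (A + B) - b \<le> nuclear_pnorm p m n A"
    if "nuclear_decomp p m n B r2 l2 x2 y2" "b = (\<Sum>k<r2. \<bar>l2 k\<bar>)" for r2 l2 x2 y2 b
    using that by (intro nuclear_pnorm_greatest[OF assms]) force
  then have "nuclear_pnorm p m n (A + B) - nuclear_pnorm p m n A \<le> nuclear_pnorm p m n B"
    by (intro nuclear_pnorm_greatest[OF assms]) force
  then show ?thesis by simp
qed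

lemma nuclear_pnorm_scale_le:
  assumes "0 < n" "c > 0"
  shows "nuclear_pnorm p m n (c *\<^sub>R A) \<le> c * nuclear_pnorm p m n A"
proof -
  have "nuclear_pnorm p m n (c *\<^sub>R A) \<le> c * (\<Sum>k<r. \<bar>l k\<bar>)"
    if "nuclear_decomp p m n A r l xs ys" for r l xs ys
  proof -
    have "nuclear_decomp p m n (c *\<^sub>R A) r (\<lambda>k. c * l k) xs ys"
      using that unfolding nuclear_decomp_def by (auto simp: sum_distrib_left mult.assoc)
    from nuclear_pnorm_le[OF this] show ?thesis
      using assms(2) by (simp add: abs_mult sum_distrib_left)
  qed
  then have "nuclear_pnorm p m n (c *\<^sub>R A) / c \<le> nuclear_pnorm p m n A"
    using assms(2) by (intro nuclear_pnorm_greatest[OF assms(1)]) (simp add: divide_le_eq mult.commute)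
  then show ?thesis using assms(2) by (simp add: divide_le_eq mult.commute)
qed

lemma sublinear_nuclear_pnorm:
  assumes "0 < n"
  shows "sublinear (nuclear_pnorm p m n)"
  unfolding sublinear_def
proof (intro conjI allI impI nuclear_pnorm_add[OF assms])
  fix c :: real and A assume c: "c > 0"
  have "nuclear_pnorm p m n A = nuclear_pnorm p m n ((1/c) *\<^sub>R (c *\<^sub>R A))" using c by simp
  also have "\<dots> \<le> (1/c) * nuclear_pnorm p m n (c *\<^sub>R A)"
    using assms c by (intro nuclear_pnorm_scale_le) auto
  finally have "c * nuclear_pnorm p m n A \<le> nuclear_pnorm p m n (c *\<^sub>R A)"
    using c by (simp add: field_simps)
  with nuclear_pnorm_scale_le[OF assms c, of p m A]
  show "nuclear_pnorm p m n (c *\<^sub>R A) = c * nuclear_pnorm p m n A"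
    by linarith
qed

section \<open>The spectral \<open>p\<close>-norm and duality\<close>

definition mat_bilinear :: "nat \<Rightarrow> nat \<Rightarrow> (nat \<Rightarrow> real) \<Rightarrow> (nat \<Rightarrow> nat \<Rightarrow> real) \<Rightarrow> (nat \<Rightarrow> real) \<Rightarrow> real"
  where "mat_bilinear m n x Z y = (\<Sum>i<m. \<Sum>j<n. x i * Z i j * y j)"

lemma mat_bilinear_uminus_left: "mat_bilinear m n (\<lambda>i. - x i) Z y = - mat_bilinear m n x Z y"
  unfolding mat_bilinear_def by (simp add: sum_negf)

lemma mat_bilinear_scale:
  "mat_bilinear m n (\<lambda>i. c * x i) Z (\<lambda>j. c' * y j) = c * c' * mat_bilinear m n x Z y"
  unfolding mat_bilinear_def by (simp add: sum_distrib_left mult_ac)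

lemma spectral_pnorm_eq_Sup:
  "spectral_pnorm p m n Z =
     Sup {mat_bilinear m n x Z y | x y. vec_pnorm p m x = 1 \<and> vec_pnorm p n y = 1}"
  unfolding spectral_pnorm_def mat_bilinear_def ..

lemma mat_bilinear_le_spectral_pnorm:
  assumes "p > 0" "vec_pnorm p m x = 1" "vec_pnorm p n y = 1"
  shows "mat_bilinear m n x Z y \<le> spectral_pnorm p m n Z"
  unfolding spectral_pnorm_eq_Sup
proof (rule cSup_upper)
  have "mat_bilinear m n x Z y \<le> (\<Sum>i<m. \<Sum>j<n. \<bar>Z i j\<bar>)"
    if "vec_pnorm p m x = 1" "vec_pnorm p n y = 1" for x y
    unfolding mat_bilinear_def
  proof (intro sum_mono)
    fix i j assume "i \<in> {..<m}" "j \<in> {..<n}"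
    then have "\<bar>x i\<bar> \<le> 1" "\<bar>y j\<bar> \<le> 1"
      using that assms(1) abs_le_one_if_vec_pnorm_eq_one by auto
    then have "\<bar>x i\<bar> * \<bar>Z i j\<bar> * \<bar>y j\<bar> \<le> 1 * \<bar>Z i j\<bar> * 1" by (intro mult_mono) auto
    then show "x i * Z i j * y j \<le> \<bar>Z i j\<bar>" by (simp add: abs_mult[symmetric])
  qed
  then show "bdd_above {mat_bilinear m n x Z y | x y. vec_pnorm p m x = 1 \<and> vec_pnorm p n y = 1}"
    unfolding bdd_above_def by blast
qed (use assms in blast)

lemma abs_mat_bilinear_le_spectral_pnorm:
  assumes "p > 0" "vec_pnorm p m x = 1" "vec_pnorm p n y = 1"
  shows "\<bar>mat_bilinear m n x Z y\<bar> \<le> spectral_pnorm p m n Z"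
  using mat_bilinear_le_spectral_pnorm[OF assms] assms
    mat_bilinear_le_spectral_pnorm[of p m "\<lambda>i. - x i" n y Z]
  by (simp add: mat_bilinear_uminus_left abs_le_iff)

lemma spectral_pnorm_nonneg:
  assumes "p > 0" "0 < m" "0 < n"
  shows "spectral_pnorm p m n Z \<ge> 0"
  using abs_mat_bilinear_le_spectral_pnorm[OF assms(1) vec_pnorm_unit_vector vec_pnorm_unit_vector] assms(2,3)
  by (meson abs_ge_zero order_trans)

lemma spectral_pnorm_le:
  assumes "0 < m" "0 < n"
    and "\<And>x y. vec_pnorm p m x = 1 \<Longrightarrow> vec_pnorm p n y = 1 \<Longrightarrow> mat_bilinear m n x Z y \<le> c"
  shows "spectral_pnorm p m n Z \<le> c"
  unfolding spectral_pnorm_eq_Sup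
  using vec_pnorm_unit_vector[OF assms(1)] vec_pnorm_unit_vector[OF assms(2)] assms(3)
  by (intro cSup_least) blast+

lemma mat_bilinear_le_spectral_pnorm_ball:
  assumes p: "p > 0" and mn: "0 < m" "0 < n"
    and x: "vec_pnorm p m x \<le> 1" and y: "vec_pnorm p n y \<le> 1"
  shows "mat_bilinear m n x Z y \<le> spectral_pnorm p m n Z"
proof (cases "vec_pnorm p m x = 0 \<or> vec_pnorm p n y = 0")
  case True
  then have "mat_bilinear m n x Z y = 0"
    unfolding mat_bilinear_def using vec_pnorm_eq_0D[of p m x] vec_pnorm_eq_0D[of p n y] by auto
  then show ?thesis using spectral_pnorm_nonneg[OF p mn] by simp
next
  case False
  define c where "c = vec_pnorm p m x"
  define c' where "c' = vec_pnorm p n y"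
  have c: "0 < c" "c \<le> 1" and c': "0 < c'" "c' \<le> 1"
    using False vec_pnorm_nonneg x y unfolding c_def c'_def by (auto simp: order_le_less)
  have "mat_bilinear m n x Z y = c * c' * mat_bilinear m n (\<lambda>i. x i / c) Z (\<lambda>j. y j / c')"
    using c c' by (simp add: mat_bilinear_scale[symmetric])
  also have "\<dots> \<le> c * c' * spectral_pnorm p m n Z"
    using c c' vec_pnorm_divide[OF _ p] unfolding c_def c'_def
    by (intro mult_left_mono mat_bilinear_le_spectral_pnorm[OF p]) auto
  also have "\<dots> \<le> spectral_pnorm p m n Z"
    using c c' spectral_pnorm_nonneg[OF p mn] by (simp add: mult_le_one mult_left_le_one_le)
  finally show ?thesis .
qed

lemma mat_inner_le_spectral_pnorm_nuclear_pnorm: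
  assumes "p > 0" "0 < m" "0 < n"
  shows "mat_inner m n A Z \<le> spectral_pnorm p m n Z * nuclear_pnorm p m n A"
proof -
  let ?s = "spectral_pnorm p m n Z"
  have decomp: "mat_inner m n A Z \<le> ?s * (\<Sum>k<r. \<bar>l k\<bar>)"
    if d: "nuclear_decomp p m n A r l xs ys" for r l xs ys
  proof -
    have "mat_inner m n A Z = (\<Sum>i<m. \<Sum>j<n. (\<Sum>k<r. l k * xs k i * ys k j) * Z i j)"
      using d unfolding mat_inner_def nuclear_decomp_def by (intro sum.cong refl) auto
    also have "\<dots> = (\<Sum>k<r. l k * mat_bilinear m n (xs k) Z (ys k))"
      unfolding mat_bilinear_def
      by (simp add: sum_distrib_left sum_distrib_right sum.swap[of _ "{..<r}"] mult_ac)
    also have "\<dots> \<le> (\<Sum>k<r. \<bar>l k\<bar> * ?s)"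
    proof (intro sum_mono)
      fix k assume "k \<in> {..<r}"
      then have "\<bar>mat_bilinear m n (xs k) Z (ys k)\<bar> \<le> ?s"
        using d assms(1) unfolding nuclear_decomp_def by (intro abs_mat_bilinear_le_spectral_pnorm) auto
      then have "\<bar>l k\<bar> * \<bar>mat_bilinear m n (xs k) Z (ys k)\<bar> \<le> \<bar>l k\<bar> * ?s"
        by (intro mult_left_mono) auto
      moreover have "l k * mat_bilinear m n (xs k) Z (ys k) \<le> \<bar>l k\<bar> * \<bar>mat_bilinear m n (xs k) Z (ys k)\<bar>"
        by (simp add: abs_mult[symmetric])
      ultimately show "l k * mat_bilinear m n (xs k) Z (ys k) \<le> \<bar>l k\<bar> * ?s"
        by linarith
    qed
    finally show ?thesis by (simp add: sum_distrib_left mult.commute)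
  qed
  show ?thesis
  proof (cases "?s = 0")
    case True
    then show ?thesis using decomp[OF nuclear_decomp_entries[OF assms(3)]] by simp
  next
    case False
    then have s: "?s > 0" using spectral_pnorm_nonneg[OF assms, of Z] by simp
    then have "mat_inner m n A Z / ?s \<le> nuclear_pnorm p m n A"
      using decomp by (intro nuclear_pnorm_greatest[OF assms(3)]) (simp add: divide_le_eq mult.commute)
    then show ?thesis using s by (simp add: divide_le_eq mult.commute)
  qed
qed

definition matrix_unit :: "nat \<Rightarrow> nat \<Rightarrow> nat \<Rightarrow> nat \<Rightarrow> real" where
  "matrix_unit i j = (\<lambda>a b. if a = i \<and> b = j then 1 else 0)"

definition truncated_matrix :: "nat \<Rightarrow> nat \<Rightarrow> (nat \<Rightarrow> nat \<Rightarrow> real) \<Rightarrow> nat \<Rightarrow> nat \<Rightarrow> real" where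
  "truncated_matrix m n c = (\<Sum>i<m. \<Sum>j<n. c i j *\<^sub>R matrix_unit i j)"

lemma sum_fun_apply: "sum f S x = (\<Sum>i\<in>S. f i x)"
  by (induction S rule: infinite_finite_induct) auto

lemma truncated_matrix_apply: "truncated_matrix m n c a b = (if a < m \<and> b < n then c a b else 0)"
proof -
  have "truncated_matrix m n c a b = (\<Sum>i<m. \<Sum>j<n. c i j * matrix_unit i j a b)"
    unfolding truncated_matrix_def by (simp add: sum_fun_apply)
  also have "\<dots> = (\<Sum>i<m. \<Sum>j<n. if j = b then (if i = a then c i j else 0) else 0)"
    unfolding matrix_unit_def by (intro sum.cong refl) auto
  also have "\<dots> = (\<Sum>i<m. if b < n then (if i = a then c i b else 0) else 0)"
    by (subst sum.delta) (simp_all only: lessThan_iff finite_lessThan)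
  also have "\<dots> = (if a < m \<and> b < n then c a b else 0)"
    by (cases "b < n") (simp_all add: sum.delta)
  finally show ?thesis .
qed

lemma truncated_matrix_in_span: "truncated_matrix m n c \<in> span {matrix_unit i j | i j. i < m \<and> j < n}"
  unfolding truncated_matrix_def by (intro span_sum span_scale span_base) auto

lemma linear_on_truncated_matrix:
  assumes "linear_on W g" "subspace W" "{matrix_unit i j | i j. i < m \<and> j < n} \<subseteq> W"
  shows "g (truncated_matrix m n c) = (\<Sum>i<m. \<Sum>j<n. c i j * g (matrix_unit i j))"
proof -
  have E: "matrix_unit i j \<in> W" if "i < m" "j < n" for i j
    using assms(3) that by blast
  then have U: "c i j *\<^sub>R matrix_unit i j \<in> W" if "i < m" "j < n" for i j c
    using assms(2) that by (intro subspace_scale) auto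
  have "g (truncated_matrix m n c) = (\<Sum>i<m. g (\<Sum>j<n. c i j *\<^sub>R matrix_unit i j))"
    unfolding truncated_matrix_def using U assms(2)
    by (intro linear_on_sum[OF assms(1,2)]) (auto intro!: subspace_sum)
  also have "\<dots> = (\<Sum>i<m. \<Sum>j<n. g (c i j *\<^sub>R matrix_unit i j))"
    using U by (intro sum.cong refl linear_on_sum[OF assms(1,2)]) auto
  also have "\<dots> = (\<Sum>i<m. \<Sum>j<n. c i j * g (matrix_unit i j))"
    using assms(1) E unfolding linear_on_def by (intro sum.cong refl) auto
  finally show ?thesis .
qed

lemma nuclear_pnorm_attained_by_dual:
  assumes "p > 0" "0 < m" "0 < n"
  shows "\<exists>Z. spectral_pnorm p m n Z \<le> 1 \<and> mat_inner m n A Z = nuclear_pnorm p m n A"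
proof -
  let ?N = "nuclear_pnorm p m n"
  let ?U = "{matrix_unit i j | i j. i < m \<and> j < n}"
  let ?W = "span (insert (truncated_matrix m n A) ?U)"
  have "?U = (\<lambda>(i, j). matrix_unit i j) ` ({..<m} \<times> {..<n})" by auto
  then have "finite ?U" by simp
  then obtain g where g: "linear_on ?W g" "\<forall>x\<in>?W. g x \<le> ?N x"
    "g (truncated_matrix m n A) = ?N (truncated_matrix m n A)"
    using hahn_banach_span[OF sublinear_nuclear_pnorm[OF assms(3)]] by blast
  have "?U \<subseteq> ?W" by (meson span_superset subset_insertI subset_trans)
  note g_trunc = linear_on_truncated_matrix[OF g(1) subspace_span this]
  have trunc_W: "truncated_matrix m n c \<in> ?W" for c
    using truncated_matrix_in_span span_mono[OF subset_insertI] by blast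
  define Z where "Z i j = g (matrix_unit i j)" for i j
  show ?thesis
  proof (intro exI conjI)
    show "spectral_pnorm p m n Z \<le> 1"
    proof (rule spectral_pnorm_le[OF assms(2,3)])
      fix x y assume u: "vec_pnorm p m x = 1" "vec_pnorm p n y = 1"
      have "mat_bilinear m n x Z y = g (truncated_matrix m n (\<lambda>i j. x i * y j))"
        unfolding g_trunc mat_bilinear_def Z_def by (simp add: mult_ac)
      also have "\<dots> \<le> ?N (truncated_matrix m n (\<lambda>i j. x i * y j))"
        using g(2) trunc_W by blast
      also have "\<dots> \<le> 1"
        by (rule nuclear_pnorm_rank_one[OF u]) (simp add: truncated_matrix_apply)
      finally show "mat_bilinear m n x Z y \<le> 1" .
    qed
    have "mat_inner m n A Z = g (truncated_matrix m n A)"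
      unfolding g_trunc mat_inner_def Z_def ..
    also have "\<dots> = ?N A"
      using g(3) nuclear_pnorm_cong[of m n "truncated_matrix m n A" A] by (simp add: truncated_matrix_apply)
    finally show "mat_inner m n A Z = ?N A" .
  qed
qed

section \<open>Rademacher sums and a weak Grothendieck inequality\<close>

definition vec_dot :: "nat \<Rightarrow> (nat \<Rightarrow> real) \<Rightarrow> (nat \<Rightarrow> real) \<Rightarrow> real" where
  "vec_dot d x y = (\<Sum>k<d. x k * y k)"

lemma vec_dot_self_nonneg: "vec_dot d x x \<ge> 0"
  unfolding vec_dot_def by (intro sum_nonneg) simp

lemma abs_vec_dot_le_one:
  assumes "vec_dot d x x \<le> 1" "vec_dot d y y \<le> 1"
  shows "\<bar>vec_dot d x y\<bar> \<le> 1"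
proof -
  have "\<bar>vec_dot d x y\<bar> \<le> (\<Sum>k<d. \<bar>x k * y k\<bar>)"
    unfolding vec_dot_def by (rule sum_abs)
  also have "\<dots> \<le> (\<Sum>k<d. (x k * x k + y k * y k) / 2)"
  proof (intro sum_mono)
    fix k
    show "\<bar>x k * y k\<bar> \<le> (x k * x k + y k * y k) / 2"
      using sum_squares_bound[of "\<bar>x k\<bar>" "\<bar>y k\<bar>"] by (simp add: abs_mult power2_eq_square)
  qed
  also have "\<dots> = (vec_dot d x x + vec_dot d y y) / 2"
    unfolding vec_dot_def by (simp add: sum.distrib sum_divide_distrib[symmetric])
  finally show ?thesis using assms by auto
qed

definition normalized :: "nat \<Rightarrow> (nat \<Rightarrow> real) \<Rightarrow> nat \<Rightarrow> real" where
  "normalized N w =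
     (if vec_dot N w w = 0 then (\<lambda>k. if k = 0 then 1 else 0) else (\<lambda>k. w k / sqrt (vec_dot N w w)))"

lemma vec_dot_self_eq_0D: "vec_dot N w w = 0 \<Longrightarrow> k < N \<Longrightarrow> w k = 0"
  unfolding vec_dot_def by (subst (asm) sum_nonneg_eq_0_iff) auto

lemma vec_dot_normalized: "0 < N \<Longrightarrow> vec_dot N (normalized N w) (normalized N w) = 1"
  using vec_dot_self_nonneg[of N w]
  by (auto simp: normalized_def vec_dot_def sum_divide_distrib[symmetric] if_distrib if_distribR
      cong: if_cong)

lemma normalized_scale: "k < N \<Longrightarrow> w k = sqrt (vec_dot N w w) * normalized N w k"
  using vec_dot_self_eq_0D[of N w k] vec_dot_self_nonneg[of N w] by (auto simp: normalized_def)

text \<open>The \<open>2 ^ d\<close> samples \<open>t < 2 ^ d\<close> enumerate all sign vectors in \<open>{-1, 1} ^ d\<close> through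
  the binary digits of \<open>t\<close>, so averages over them are expectations of Rademacher sums.\<close>
definition rademacher :: "nat \<Rightarrow> nat \<Rightarrow> real" where
  "rademacher k t = (if odd (t div 2 ^ k) then 1 else -1)"

definition rademacher_sum :: "nat \<Rightarrow> (nat \<Rightarrow> real) \<Rightarrow> nat \<Rightarrow> real" where
  "rademacher_sum d u t = (\<Sum>k<d. u k * rademacher k t)"

lemma sum_lessThan_pow2_Suc:
  fixes F :: "nat \<Rightarrow> real"
  shows "(\<Sum>t<2 ^ Suc d. F t) = (\<Sum>t<2 ^ d. F t + F (t + 2 ^ d))"
proof -
  have "(\<Sum>t<2 ^ Suc d. F t) = (\<Sum>t\<in>{0..<2 ^ d + 2 ^ d}. F t)"
    by (simp add: atLeast0LessThan mult_2)
  also have "\<dots> = (\<Sum>t\<in>{0..<2 ^ d}. F t) + (\<Sum>t\<in>{0 + 2 ^ d..<2 ^ d + 2 ^ d}. F t)"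
    by (simp add: sum.atLeastLessThan_concat)
  also have "(\<Sum>t\<in>{0 + 2 ^ d..<2 ^ d + 2 ^ d}. F t) = (\<Sum>t\<in>{0..<2 ^ d}. F (t + 2 ^ d))"
    by (rule sum.shift_bounds_nat_ivl)
  finally show ?thesis by (simp add: atLeast0LessThan sum.distrib)
qed

lemma rademacher_add_pow2:
  assumes "k < d"
  shows "rademacher k (t + 2 ^ d) = rademacher k t"
proof -
  have "(2::nat) ^ d = 2 ^ (d - k) * 2 ^ k" using assms by (simp add: power_add[symmetric])
  then have "(t + 2 ^ d) div 2 ^ k = t div 2 ^ k + 2 ^ (d - k)" by simp
  moreover have "even ((2::nat) ^ (d - k))" using assms by simp
  ultimately show ?thesis unfolding rademacher_def by simp
qed

lemma rademacher_sum_Suc: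
  assumes "t < 2 ^ d"
  shows "rademacher_sum (Suc d) u t = rademacher_sum d u t - u d"
    and "rademacher_sum (Suc d) u (t + 2 ^ d) = rademacher_sum d u t + u d"
proof -
  have "rademacher_sum d u (t + 2 ^ d) = rademacher_sum d u t"
    unfolding rademacher_sum_def by (intro sum.cong refl) (simp add: rademacher_add_pow2)
  then show "rademacher_sum (Suc d) u t = rademacher_sum d u t - u d"
    and "rademacher_sum (Suc d) u (t + 2 ^ d) = rademacher_sum d u t + u d"
    using assms unfolding rademacher_sum_def by (simp_all add: rademacher_def)
qed

lemma sum_rademacher_sum_mult:
  "(\<Sum>t<2 ^ d. rademacher_sum d u t * rademacher_sum d v t) = 2 ^ d * vec_dot d u v"
proof (induction d)
  case 0
  then show ?case by (simp add: rademacher_sum_def vec_dot_def)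
next
  case (Suc d)
  let ?U = "rademacher_sum d u" and ?V = "rademacher_sum d v"
  have "(\<Sum>t<2 ^ Suc d. rademacher_sum (Suc d) u t * rademacher_sum (Suc d) v t)
      = (\<Sum>t<2 ^ d. (?U t - u d) * (?V t - v d) + (?U t + u d) * (?V t + v d))"
    unfolding sum_lessThan_pow2_Suc by (intro sum.cong refl) (simp add: rademacher_sum_Suc)
  also have "\<dots> = 2 * (\<Sum>t<2 ^ d. ?U t * ?V t) + 2 ^ d * (2 * (u d * v d))"
    by (simp add: algebra_simps sum.distrib sum_distrib_left)
  also have "\<dots> = 2 ^ Suc d * vec_dot (Suc d) u v"
    unfolding Suc.IH by (simp add: vec_dot_def algebra_simps)
  finally show ?case .
qed

lemma sum_rademacher_sum_pow4_le:
  "(\<Sum>t<2 ^ d. rademacher_sum d u t ^ 4) \<le> 3 * 2 ^ d * vec_dot d u u ^ 2"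
proof (induction d)
  case 0
  then show ?case by (simp add: rademacher_sum_def vec_dot_def)
next
  case (Suc d)
  let ?U = "rademacher_sum d u" and ?a = "u d" and ?s = "vec_dot d u u"
  have "(\<Sum>t<2 ^ Suc d. rademacher_sum (Suc d) u t ^ 4) = (\<Sum>t<2 ^ d. (?U t - ?a) ^ 4 + (?U t + ?a) ^ 4)"
    unfolding sum_lessThan_pow2_Suc by (intro sum.cong refl) (simp add: rademacher_sum_Suc)
  also have "\<dots> = 2 * (\<Sum>t<2 ^ d. ?U t ^ 4) + 12 * ?a\<^sup>2 * (\<Sum>t<2 ^ d. ?U t * ?U t) + 2 ^ d * (2 * ?a ^ 4)"
    by (simp add: power2_eq_square power4_eq_xxxx algebra_simps sum.distrib sum_distrib_left)
  also have "\<dots> \<le> 2 * (3 * 2 ^ d * ?s\<^sup>2) + 12 * ?a\<^sup>2 * (2 ^ d * ?s) + 2 ^ d * (2 * ?a ^ 4)"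
    unfolding sum_rademacher_sum_mult using Suc.IH by simp
  also have "\<dots> \<le> 3 * 2 ^ Suc d * (?s + ?a\<^sup>2)\<^sup>2" (is "?L \<le> ?R")
  proof -
    have "?R - ?L = 2 ^ d * (4 * ?a ^ 4)"
      by (simp add: power2_eq_square power4_eq_xxxx algebra_simps)
    moreover have "0 \<le> 2 ^ d * (4 * ?a ^ 4 :: real)" by simp
    ultimately show ?thesis by linarith
  qed
  also have "?s + ?a\<^sup>2 = vec_dot (Suc d) u u" by (simp add: vec_dot_def power2_eq_square)
  finally show ?case .
qed

definition inf_one_norm :: "nat \<Rightarrow> nat \<Rightarrow> (nat \<Rightarrow> nat \<Rightarrow> real) \<Rightarrow> real" where
  "inf_one_norm m n a = Sup {(\<Sum>i<m. \<Sum>j<n. a i j * e i * f j) | e f.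
     (\<forall>i<m. e i \<in> {-1, 1}) \<and> (\<forall>j<n. f j \<in> {-1, 1})}"

lemma inf_one_norm_upper:
  fixes e f :: "nat \<Rightarrow> real"
  assumes "\<And>i. i < m \<Longrightarrow> e i \<in> {-1, 1}" "\<And>j. j < n \<Longrightarrow> f j \<in> {-1, 1}"
  shows "(\<Sum>i<m. \<Sum>j<n. a i j * e i * f j) \<le> inf_one_norm m n a"
  unfolding inf_one_norm_def
proof (rule cSup_upper)
  have "(\<Sum>i<m. \<Sum>j<n. a i j * e' i * f' j) \<le> (\<Sum>i<m. \<Sum>j<n. \<bar>a i j\<bar>)"
    if "\<forall>i<m. e' i \<in> {-1, 1}" "\<forall>j<n. f' j \<in> {-1, 1 :: real}" for e' f'
  proof (intro sum_mono)
    fix i j assume "i \<in> {..<m}" "j \<in> {..<n}"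
    then have "\<bar>e' i\<bar> = 1" "\<bar>f' j\<bar> = 1" using that by auto
    then show "a i j * e' i * f' j \<le> \<bar>a i j\<bar>"
      using abs_ge_self[of "a i j * e' i * f' j"] by (simp add: abs_mult)
  qed
  then show "bdd_above {(\<Sum>i<m. \<Sum>j<n. a i j * e i * f j) | e f.
     (\<forall>i<m. e i \<in> {-1, 1}) \<and> (\<forall>j<n. f j \<in> {-1, 1})}"
    unfolding bdd_above_def by blast
qed (use assms in blast)

text \<open>Choose the signs greedily, first \<open>e\<close> against \<open>\<beta>\<close> and then \<open>f\<close> against \<open>e\<close>.\<close>
lemma bilinear_le_inf_one_norm:
  assumes "\<And>i. i < m \<Longrightarrow> \<bar>\<alpha> i\<bar> \<le> 1" "\<And>j. j < n \<Longrightarrow> \<bar>\<beta> j\<bar> \<le> 1"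
  shows "(\<Sum>i<m. \<Sum>j<n. a i j * \<alpha> i * \<beta> j) \<le> inf_one_norm m n a"
proof -
  have le_abs: "t * c \<le> \<bar>c\<bar>" if "\<bar>t\<bar> \<le> 1" for t c :: real
    using that mult_right_mono[of "\<bar>t\<bar>" 1 "\<bar>c\<bar>"] by (simp add: abs_mult[symmetric] abs_le_iff)
  define c where "c i = (\<Sum>j<n. a i j * \<beta> j)" for i
  define e where "e i = (if c i \<ge> 0 then 1 else - 1 :: real)" for i
  define r where "r j = (\<Sum>i<m. a i j * e i)" for j
  define f where "f j = (if r j \<ge> 0 then 1 else - 1 :: real)" for j
  have "(\<Sum>i<m. \<Sum>j<n. a i j * \<alpha> i * \<beta> j) = (\<Sum>i<m. \<alpha> i * c i)"
    unfolding c_def by (simp add: sum_distrib_left mult_ac)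
  also have "\<dots> \<le> (\<Sum>i<m. e i * c i)"
  proof (intro sum_mono)
    fix i assume "i \<in> {..<m}"
    then have "\<alpha> i * c i \<le> \<bar>c i\<bar>" using le_abs assms(1) by simp
    also have "\<bar>c i\<bar> = e i * c i" by (simp add: e_def)
    finally show "\<alpha> i * c i \<le> e i * c i" .
  qed
  also have "\<dots> = (\<Sum>j<n. \<beta> j * r j)"
    unfolding c_def r_def by (simp add: sum_distrib_left sum.swap[of _ "{..<n}"] mult_ac)
  also have "\<dots> \<le> (\<Sum>j<n. f j * r j)"
  proof (intro sum_mono)
    fix j assume "j \<in> {..<n}"
    then have "\<beta> j * r j \<le> \<bar>r j\<bar>" using le_abs assms(2) by simp
    also have "\<bar>r j\<bar> = f j * r j" by (simp add: f_def)
    finally show "\<beta> j * r j \<le> f j * r j" .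
  qed
  also have "\<dots> = (\<Sum>i<m. \<Sum>j<n. a i j * e i * f j)"
    unfolding r_def by (simp add: sum_distrib_left sum_distrib_right sum.swap[of _ "{..<n}"] mult_ac)
  also have "\<dots> \<le> inf_one_norm m n a"
    by (rule inf_one_norm_upper) (simp_all add: e_def f_def)
  finally show ?thesis .
qed

definition gram_norm :: "nat \<Rightarrow> nat \<Rightarrow> (nat \<Rightarrow> nat \<Rightarrow> real) \<Rightarrow> real" where
  "gram_norm m n a = Sup {(\<Sum>i<m. \<Sum>j<n. a i j * vec_dot d (x i) (y j)) | d x y.
     (\<forall>i<m. vec_dot d (x i) (x i) \<le> 1) \<and> (\<forall>j<n. vec_dot d (y j) (y j) \<le> 1)}"

lemma gram_norm_upper:
  assumes "\<And>i. i < m \<Longrightarrow> vec_dot d (x i) (x i) \<le> 1" "\<And>j. j < n \<Longrightarrow> vec_dot d (y j) (y j) \<le> 1"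
  shows "(\<Sum>i<m. \<Sum>j<n. a i j * vec_dot d (x i) (y j)) \<le> gram_norm m n a"
  unfolding gram_norm_def
proof (rule cSup_upper)
  have "(\<Sum>i<m. \<Sum>j<n. a i j * vec_dot d (x i) (y j)) \<le> (\<Sum>i<m. \<Sum>j<n. \<bar>a i j\<bar>)"
    if "\<forall>i<m. vec_dot d (x i) (x i) \<le> 1" "\<forall>j<n. vec_dot d (y j) (y j) \<le> 1" for d x y
  proof (intro sum_mono)
    fix i j assume "i \<in> {..<m}" "j \<in> {..<n}"
    then have "\<bar>a i j\<bar> * \<bar>vec_dot d (x i) (y j)\<bar> \<le> \<bar>a i j\<bar> * 1"
      using that by (intro mult_left_mono abs_vec_dot_le_one) auto
    then show "a i j * vec_dot d (x i) (y j) \<le> \<bar>a i j\<bar>" by (simp add: abs_mult[symmetric] abs_le_iff)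
  qed
  then show "bdd_above {(\<Sum>i<m. \<Sum>j<n. a i j * vec_dot d (x i) (y j)) | d x y.
     (\<forall>i<m. vec_dot d (x i) (x i) \<le> 1) \<and> (\<forall>j<n. vec_dot d (y j) (y j) \<le> 1)}"
    unfolding bdd_above_def by blast
qed (use assms in blast)

lemma sum_samples_le_gram_norm:
  fixes T :: nat
  assumes D: "D > 0"
    and P: "\<And>i. i < m \<Longrightarrow> (\<Sum>t<T. P i t ^ 2) \<le> D" and Q: "\<And>j. j < n \<Longrightarrow> (\<Sum>t<T. Q j t ^ 2) \<le> D"
  shows "(\<Sum>t<T. \<Sum>i<m. \<Sum>j<n. a i j * (P i t * Q j t)) \<le> D * gram_norm m n a"
proof -
  have scaled: "vec_dot T (\<lambda>t. F t / sqrt D) (\<lambda>t. G t / sqrt D) = (\<Sum>t<T. F t * G t) / D" for F G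
    using D unfolding vec_dot_def by (simp add: sum_divide_distrib)
  have "(\<Sum>t<T. \<Sum>i<m. \<Sum>j<n. a i j * (P i t * Q j t)) = (\<Sum>i<m. \<Sum>j<n. a i j * (\<Sum>t<T. P i t * Q j t))"
    by (simp add: sum_distrib_left sum.swap[of _ "{..<T}"])
  also have "\<dots> = (\<Sum>i<m. \<Sum>j<n. D * (a i j * vec_dot T (\<lambda>t. P i t / sqrt D) (\<lambda>t. Q j t / sqrt D)))"
    using D by (intro sum.cong refl) (simp add: scaled)
  also have "\<dots> = D * (\<Sum>i<m. \<Sum>j<n. a i j * vec_dot T (\<lambda>t. P i t / sqrt D) (\<lambda>t. Q j t / sqrt D))"
    by (simp add: sum_distrib_left)
  also have "\<dots> \<le> D * gram_norm m n a"
    using D P Q by (intro mult_left_mono gram_norm_upper) (auto simp: scaled power2_eq_square)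
  finally show ?thesis .
qed

definition clip :: "real \<Rightarrow> real" where
  "clip z = max (-8) (min 8 z)"

lemma abs_clip_le: "\<bar>clip z\<bar> \<le> 8"
  unfolding clip_def by auto

lemma clip_sq_le: "(clip z)\<^sup>2 \<le> z\<^sup>2"
  unfolding clip_def by (simp add: abs_le_square_iff[symmetric])

lemma clip_tail_sq_le: "(z - clip z)\<^sup>2 \<le> z ^ 4 / 64"
proof (cases "\<bar>z\<bar> \<le> 8")
  case True
  then show ?thesis unfolding clip_def by auto
next
  case False
  then have "(z - clip z)\<^sup>2 \<le> z\<^sup>2" unfolding clip_def by (simp add: abs_le_square_iff[symmetric])
  also have "z\<^sup>2 = z\<^sup>2 * 1" by simp
  also have "\<dots> \<le> z\<^sup>2 * (z\<^sup>2 / 64)"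
    using False abs_le_square_iff[of 8 z] by (intro mult_left_mono) auto
  finally show ?thesis by (simp add: power4_eq_xxxx power2_eq_square)
qed

lemma sum_sq_rademacher_sum_le:
  assumes "vec_dot d u u \<le> 1"
  shows "(\<Sum>t<2 ^ d. (rademacher_sum d u t)\<^sup>2) \<le> 2 ^ d"
  using sum_rademacher_sum_mult[of d u u] assms by (simp add: power2_eq_square)

lemma sum_sq_clip_rademacher_sum_le:
  assumes "vec_dot d u u \<le> 1"
  shows "(\<Sum>t<2 ^ d. (clip (rademacher_sum d u t))\<^sup>2) \<le> 2 ^ d"
proof -
  have "(\<Sum>t<2 ^ d. (clip (rademacher_sum d u t))\<^sup>2) \<le> (\<Sum>t<2 ^ d. (rademacher_sum d u t)\<^sup>2)"
    by (intro sum_mono clip_sq_le)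
  with sum_sq_rademacher_sum_le[OF assms] show ?thesis by linarith
qed

lemma sum_sq_clip_tail_le:
  assumes "vec_dot d u u \<le> 1"
  shows "(\<Sum>t<2 ^ d. (4 * (rademacher_sum d u t - clip (rademacher_sum d u t)))\<^sup>2) \<le> 2 ^ d"
proof -
  have "(\<Sum>t<2 ^ d. (4 * (rademacher_sum d u t - clip (rademacher_sum d u t)))\<^sup>2)
      \<le> (\<Sum>t<2 ^ d. rademacher_sum d u t ^ 4) / 4"
    unfolding sum_divide_distrib
  proof (intro sum_mono)
    fix t
    let ?R = "rademacher_sum d u t"
    have "(4 * (?R - clip ?R))\<^sup>2 = 16 * (?R - clip ?R)\<^sup>2"
      unfolding power_mult_distrib by simp
    then show "(4 * (?R - clip ?R))\<^sup>2 \<le> ?R ^ 4 / 4"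
      using clip_tail_sq_le[of ?R] by linarith
  qed
  also have "\<dots> \<le> 3 * 2 ^ d * (vec_dot d u u)\<^sup>2 / 4"
    using sum_rademacher_sum_pow4_le by (intro divide_right_mono) auto
  also have "\<dots> \<le> 3 * 2 ^ d * 1 / 4"
    using assms vec_dot_self_nonneg[of d u] by (intro divide_right_mono mult_left_mono power_le_one) auto
  also have "\<dots> \<le> 2 ^ d" by simp
  finally show ?thesis .
qed

lemma sum_samples_clip_le_inf_one_norm:
  fixes T :: nat
  shows "(\<Sum>t<T. \<Sum>i<m. \<Sum>j<n. a i j * (clip (P i t) * clip (Q j t))) \<le> T * (64 * inf_one_norm m n a)"
proof -
  have "(\<Sum>i<m. \<Sum>j<n. a i j * (clip (P i t) * clip (Q j t))) \<le> 64 * inf_one_norm m n a" for t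
  proof -
    have "(\<Sum>i<m. \<Sum>j<n. a i j * (clip (P i t) / 8) * (clip (Q j t) / 8)) \<le> inf_one_norm m n a"
      by (rule bilinear_le_inf_one_norm) (use abs_clip_le in auto)
    moreover have "(\<Sum>i<m. \<Sum>j<n. a i j * (clip (P i t) * clip (Q j t)))
        = 64 * (\<Sum>i<m. \<Sum>j<n. a i j * (clip (P i t) / 8) * (clip (Q j t) / 8))"
      by (simp add: sum_distrib_left mult.assoc)
    ultimately show ?thesis by simp
  qed
  then have "(\<Sum>t<T. \<Sum>i<m. \<Sum>j<n. a i j * (clip (P i t) * clip (Q j t)))
      \<le> (\<Sum>t<T. 64 * inf_one_norm m n a)"
    by (intro sum_mono)
  then show ?thesis by simp
qed

text \<open>Average over all sign vectors and split each Rademacher sum \<open>U\<close> as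
  \<open>clip U + (U - clip U)\<close>. The clipped part is, sample by sample, a bilinear form with
  coefficients in \<open>[-8, 8]\<close>; each part containing a tail is a Gram form whose vectors have
  norm at most \<open>1/4\<close> in mean square, by the fourth moment bound.\<close>
lemma gram_bilinear_le_inf_one_norm_gram_norm:
  assumes x: "\<And>i. i < m \<Longrightarrow> vec_dot d (x i) (x i) \<le> 1"
    and y: "\<And>j. j < n \<Longrightarrow> vec_dot d (y j) (y j) \<le> 1"
  shows "(\<Sum>i<m. \<Sum>j<n. a i j * vec_dot d (x i) (y j)) \<le> 64 * inf_one_norm m n a + gram_norm m n a / 2"
proof -
  define D :: real where "D = 2 ^ d"
  have D: "D > 0" unfolding D_def by simp
  define U where "U i = rademacher_sum d (x i)" for i
  define V where "V j = rademacher_sum d (y j)" for j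
  define tail where "tail z = 4 * (z - clip z)" for z
  let ?S = "\<lambda>F G. (\<Sum>t<2 ^ d. \<Sum>i<m. \<Sum>j<n. a i j * (F i t * G j t))"
  have "D * (\<Sum>i<m. \<Sum>j<n. a i j * vec_dot d (x i) (y j)) = ?S U V"
    unfolding D_def U_def V_def
    by (simp add: sum_rademacher_sum_mult[symmetric] sum_distrib_left sum.swap[of _ "{..<2 ^ d}"] mult_ac)
  also have "\<dots> = (\<Sum>t<2 ^ d. \<Sum>i<m. \<Sum>j<n. a i j * (clip (U i t) * clip (V j t))
      + a i j * (clip (U i t) * tail (V j t)) / 4 + a i j * (tail (U i t) * V j t) / 4)"
    by (intro sum.cong refl) (simp add: tail_def field_simps)
  also have "\<dots> = ?S (\<lambda>i t. clip (U i t)) (\<lambda>j t. clip (V j t))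
      + ?S (\<lambda>i t. clip (U i t)) (\<lambda>j t. tail (V j t)) / 4 + ?S (\<lambda>i t. tail (U i t)) V / 4"
    by (simp only: sum.distrib sum_divide_distrib)
  also have "\<dots> \<le> D * (64 * inf_one_norm m n a) + D * gram_norm m n a / 4 + D * gram_norm m n a / 4"
  proof (intro add_mono divide_right_mono)
    show "?S (\<lambda>i t. clip (U i t)) (\<lambda>j t. clip (V j t)) \<le> D * (64 * inf_one_norm m n a)"
      using sum_samples_clip_le_inf_one_norm[where T = "2 ^ d" and a = a and P = U and Q = V]
      unfolding D_def by simp
    show "?S (\<lambda>i t. clip (U i t)) (\<lambda>j t. tail (V j t)) \<le> D * gram_norm m n a"
      using sum_sq_clip_tail_le[OF y] sum_sq_clip_rademacher_sum_le[OF x]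
      unfolding U_def V_def D_def tail_def by (intro sum_samples_le_gram_norm) auto
    show "?S (\<lambda>i t. tail (U i t)) V \<le> D * gram_norm m n a"
      using sum_sq_clip_tail_le[OF x] sum_sq_rademacher_sum_le[OF y]
      unfolding U_def V_def D_def tail_def by (intro sum_samples_le_gram_norm) auto
  qed auto
  also have "\<dots> = D * (64 * inf_one_norm m n a + gram_norm m n a / 2)" by (simp add: algebra_simps)
  finally show ?thesis using D by simp
qed

lemma gram_norm_le_inf_one_norm: "gram_norm m n a \<le> 128 * inf_one_norm m n a"
proof -
  let ?G = "{(\<Sum>i<m. \<Sum>j<n. a i j * vec_dot d (x i) (y j)) | d x y.
     (\<forall>i<m. vec_dot d (x i) (x i) \<le> 1) \<and> (\<forall>j<n. vec_dot d (y j) (y j) \<le> 1)}"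
  have "Sup ?G \<le> 64 * inf_one_norm m n a + gram_norm m n a / 2"
  proof (rule cSup_least)
    have "0 \<in> ?G" by (rule CollectI, rule exI[of _ 0]) (simp add: vec_dot_def)
    then show "?G \<noteq> {}" by blast
  next
    fix v assume "v \<in> ?G"
    then show "v \<le> 64 * inf_one_norm m n a + gram_norm m n a / 2"
      using gram_bilinear_le_inf_one_norm_gram_norm by auto
  qed
  then have "gram_norm m n a \<le> 64 * inf_one_norm m n a + gram_norm m n a / 2"
    unfolding gram_norm_def .
  then show ?thesis by simp
qed

definition grothendieck_bounds :: "real set" where
  "grothendieck_bounds = {K. \<forall>(m::nat) (n::nat) (d::nat) (a::nat \<Rightarrow> nat \<Rightarrow> real)
        (u::nat \<Rightarrow> nat \<Rightarrow> real) (v::nat \<Rightarrow> nat \<Rightarrow> real).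
      (\<forall>i<m. (\<Sum>k<d. (u i k)\<^sup>2) = 1) \<and> (\<forall>j<n. (\<Sum>k<d. (v j k)\<^sup>2) = 1) \<longrightarrow>
      (\<Sum>i<m. \<Sum>j<n. a i j * (\<Sum>k<d. u i k * v j k))
        \<le> K * Sup {(\<Sum>i<m. \<Sum>j<n. a i j * e i * f j) | e f.
                    (\<forall>i<m. e i \<in> {-1, 1}) \<and> (\<forall>j<n. f j \<in> {-1, 1})}}"

lemma grothendieck_const_eq_Inf: "grothendieck_const = Inf grothendieck_bounds"
  unfolding grothendieck_const_def grothendieck_bounds_def ..

lemma grothendieck_bounds_iff:
  "K \<in> grothendieck_bounds \<longleftrightarrow>
     (\<forall>m n d a u v. (\<forall>i<m. vec_dot d (u i) (u i) = 1) \<and> (\<forall>j<n. vec_dot d (v j) (v j) = 1)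
        \<longrightarrow> (\<Sum>i<m. \<Sum>j<n. a i j * vec_dot d (u i) (v j)) \<le> K * inf_one_norm m n a)"
  unfolding grothendieck_bounds_def inf_one_norm_def vec_dot_def by (simp add: power2_eq_square)

lemma weak_grothendieck_inequality: "128 \<in> grothendieck_bounds"
  unfolding grothendieck_bounds_iff
proof (intro allI impI)
  fix m n d :: nat and a :: "nat \<Rightarrow> nat \<Rightarrow> real" and u v :: "nat \<Rightarrow> nat \<Rightarrow> real"
  assume "(\<forall>i<m. vec_dot d (u i) (u i) = 1) \<and> (\<forall>j<n. vec_dot d (v j) (v j) = 1)"
  then have "(\<Sum>i<m. \<Sum>j<n. a i j * vec_dot d (u i) (v j)) \<le> gram_norm m n a"
    by (intro gram_norm_upper) auto
  also have "\<dots> \<le> 128 * inf_one_norm m n a" by (rule gram_norm_le_inf_one_norm)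
  finally show "(\<Sum>i<m. \<Sum>j<n. a i j * vec_dot d (u i) (v j)) \<le> 128 * inf_one_norm m n a" .
qed

lemma one_le_grothendieck_bound:
  assumes "K \<in> grothendieck_bounds"
  shows "1 \<le> K"
proof -
  let ?a = "\<lambda>_ _. 1 :: real"
  have "inf_one_norm 1 1 ?a \<le> 1"
    unfolding inf_one_norm_def by (rule cSup_least) auto
  moreover have "1 \<le> inf_one_norm 1 1 ?a"
    using bilinear_le_inf_one_norm[where m = 1 and n = 1 and a = ?a and \<alpha> = "\<lambda>_. 1" and \<beta> = "\<lambda>_. 1"] by simp
  moreover have "1 \<le> K * inf_one_norm 1 1 ?a"
    using assms[unfolded grothendieck_bounds_iff, rule_format, where m = 1 and n = 1 and d = 1 and a = ?a and u = ?a and v = ?a]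
    by (simp add: vec_dot_def)
  ultimately show ?thesis by simp
qed

section \<open>Gram factorization of positive semidefinite matrices\<close>

definition psd_on :: "nat set \<Rightarrow> (nat \<Rightarrow> nat \<Rightarrow> real) \<Rightarrow> bool" where
  "psd_on I X \<longleftrightarrow>
     (\<forall>i\<in>I. \<forall>j\<in>I. X i j = X j i) \<and> (\<forall>x. (\<Sum>i\<in>I. \<Sum>j\<in>I. x i * X i j * x j) \<ge> 0)"

lemma psd_iff_psd_on: "psd N X \<longleftrightarrow> psd_on {..<N} X"
  unfolding psd_def psd_on_def by auto

lemma psd_on_quad_nonneg: "psd_on I X \<Longrightarrow> 0 \<le> (\<Sum>i\<in>I. \<Sum>j\<in>I. x i * X i j * x j)"
  unfolding psd_on_def by blast

lemma psd_on_subset: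
  assumes psd: "psd_on I X" and I: "finite I" and J: "J \<subseteq> I"
  shows "psd_on J X"
  unfolding psd_on_def
proof (intro conjI allI ballI)
  show "X i j = X j i" if "i \<in> J" "j \<in> J" for i j
    using psd that J unfolding psd_on_def by blast
  fix x :: "nat \<Rightarrow> real"
  let ?y = "\<lambda>i. if i \<in> J then x i else 0"
  have "(\<Sum>i\<in>J. \<Sum>j\<in>J. x i * X i j * x j) = (\<Sum>i\<in>J. \<Sum>j\<in>J. ?y i * X i j * ?y j)"
    by (intro sum.cong refl) simp
  also have "\<dots> = (\<Sum>i\<in>I. \<Sum>j\<in>J. ?y i * X i j * ?y j)"
    by (rule sum.mono_neutral_left[OF I J]) simp
  also have "\<dots> = (\<Sum>i\<in>I. \<Sum>j\<in>I. ?y i * X i j * ?y j)"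
    by (intro sum.cong refl sum.mono_neutral_left[OF I J]) simp
  finally show "0 \<le> (\<Sum>i\<in>J. \<Sum>j\<in>J. x i * X i j * x j)"
    using psd_on_quad_nonneg[OF psd, of ?y] by simp
qed

lemma psd_on_diag_nonneg:
  assumes "psd_on I X" "finite I" "a \<in> I"
  shows "0 \<le> X a a"
proof -
  have "psd_on {a} X" using assms by (auto intro: psd_on_subset[OF assms(1,2)])
  from psd_on_quad_nonneg[OF this, of "\<lambda>_. 1"] show ?thesis by simp
qed

lemma psd_on_two_point:
  assumes "psd_on I X" "finite I" "a \<in> I" "b \<in> I" "a \<noteq> b"
  shows "0 \<le> s * s * X a a + 2 * s * X a b + X b b"
proof -
  have psd: "psd_on {a, b} X" using assms by (auto intro: psd_on_subset[OF assms(1,2)])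
  then have "0 \<le> (\<Sum>i\<in>{a, b}. \<Sum>j\<in>{a, b}. (if i = a then s else 1) * X i j * (if j = a then s else 1))"
    by (rule psd_on_quad_nonneg)
  moreover have "X b a = X a b" using psd unfolding psd_on_def by blast
  ultimately show ?thesis using assms(5) by (simp add: algebra_simps)
qed

lemma psd_on_diag_zero:
  assumes psd: "psd_on I X" "finite I" "a \<in> I" "b \<in> I" and zero: "X a a = 0"
  shows "X a b = 0"
proof (rule ccontr)
  assume ne: "X a b \<noteq> 0"
  with zero have "a \<noteq> b" by auto
  define s where "s = - (X b b + 1) / (2 * X a b)"
  have "0 \<le> s * s * X a a + 2 * s * X a b + X b b"
    by (rule psd_on_two_point[OF psd \<open>a \<noteq> b\<close>])
  also have "\<dots> = -1" using ne zero by (simp add: s_def field_simps)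
  finally show False by simp
qed

lemma quad_form_insert:
  fixes X :: "nat \<Rightarrow> nat \<Rightarrow> real"
  assumes "a \<notin> J" "finite J" "\<And>i. i \<in> J \<Longrightarrow> X i a = X a i"
  shows "(\<Sum>i\<in>insert a J. \<Sum>j\<in>insert a J. x i * X i j * x j)
     = x a * X a a * x a + 2 * x a * (\<Sum>j\<in>J. X a j * x j) + (\<Sum>i\<in>J. \<Sum>j\<in>J. x i * X i j * x j)"
proof -
  have "(\<Sum>i\<in>J. x i * X i a * x a) = x a * (\<Sum>j\<in>J. X a j * x j)"
    using assms(3) by (simp add: sum_distrib_left mult_ac)
  moreover have "(\<Sum>j\<in>J. x a * X a j * x j) = x a * (\<Sum>j\<in>J. X a j * x j)"
    by (simp add: sum_distrib_left mult_ac)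
  moreover have "(\<Sum>i\<in>insert a J. \<Sum>j\<in>insert a J. x i * X i j * x j)
      = x a * X a a * x a + (\<Sum>j\<in>J. x a * X a j * x j) + (\<Sum>i\<in>J. x i * X i a * x a)
        + (\<Sum>i\<in>J. \<Sum>j\<in>J. x i * X i j * x j)"
    using assms(1,2) by (simp add: sum.distrib)
  ultimately show ?thesis by simp
qed

text \<open>When \<open>X a a = 0\<close> the division yields \<open>0\<close>, and the complement is just the restriction
  of \<open>X\<close> to \<open>J\<close>.\<close>
lemma psd_on_schur_complement:
  assumes psd: "psd_on (insert a J) X" and a: "a \<notin> J" and J: "finite J"
  shows "psd_on J (\<lambda>i j. X i j - X i a * X a j / X a a)"
  unfolding psd_on_def
proof (intro conjI allI ballI)
  have sym: "X i j = X j i" if "i \<in> insert a J" "j \<in> insert a J" for i j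
    using psd that unfolding psd_on_def by blast
  show "X i j - X i a * X a j / X a a = X j i - X j a * X a i / X a a" if "i \<in> J" "j \<in> J" for i j
    using that sym[of i j] sym[of i a] sym[of j a] by simp
  fix x :: "nat \<Rightarrow> real"
  define b where "b = (\<Sum>j\<in>J. X a j * x j)"
  define x' where "x' = x(a := - b / X a a)"
  have "0 \<le> (\<Sum>i\<in>insert a J. \<Sum>j\<in>insert a J. x' i * X i j * x' j)"
    by (rule psd_on_quad_nonneg[OF psd])
  also have "\<dots> = x' a * X a a * x' a + 2 * x' a * b + (\<Sum>i\<in>J. \<Sum>j\<in>J. x i * X i j * x j)"
  proof -
    have "X i a = X a i" if "i \<in> J" for i using sym that by blast
    moreover have "(\<Sum>j\<in>J. X a j * x' j) = b" "(\<Sum>i\<in>J. \<Sum>j\<in>J. x' i * X i j * x' j) = (\<Sum>i\<in>J. \<Sum>j\<in>J. x i * X i j * x j)"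
      using a by (auto simp: x'_def b_def intro!: sum.cong)
    ultimately show ?thesis by (simp add: quad_form_insert[OF a J])
  qed
  also have "x' a * X a a * x' a + 2 * x' a * b = - (b * b / X a a)"
    by (cases "X a a = 0") (simp_all add: x'_def field_simps power2_eq_square)
  also have "b * b / X a a = (\<Sum>i\<in>J. \<Sum>j\<in>J. x i * (X i a * X a j / X a a) * x j)"
    unfolding b_def sum_product using sym a
    by (simp add: sum_divide_distrib mult_ac cong: sum.cong)
  finally show "0 \<le> (\<Sum>i\<in>J. \<Sum>j\<in>J. x i * (X i j - X i a * X a j / X a a) * x j)"
    by (simp add: sum_subtractf[symmetric] algebra_simps)
qed

lemma psd_on_pivot:
  assumes psd: "psd_on I X" and I: "finite I" and a: "a \<in> I"
    and ij: "i \<in> I" "j \<in> I" "i = a \<or> j = a"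
  shows "X i a * X j a / X a a = X i j"
proof -
  have sym: "X k l = X l k" if "k \<in> I" "l \<in> I" for k l
    using psd that unfolding psd_on_def by blast
  show ?thesis
  proof (cases "X a a = 0")
    case True
    have "X a k = 0" "X k a = 0" if "k \<in> I" for k
      using psd_on_diag_zero[OF psd I a that] True sym[OF that a] by auto
    then show ?thesis using ij True by auto
  next
    case False
    then show ?thesis using ij sym a by auto
  qed
qed

lemma psd_on_gram_factorization:
  assumes "finite I" "psd_on I X"
  shows "\<exists>u. \<forall>i\<in>I. \<forall>j\<in>I. (\<Sum>k\<in>I. u i k * u j k) = X i j"
  using assms
proof (induction I arbitrary: X rule: finite_induct)
  case empty
  then show ?case by simp
next
  case (insert a J)
  have psd: "psd_on (insert a J) X" by fact
  have fin: "finite (insert a J)" using insert.hyps by simp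
  have sym: "X i j = X j i" if "i \<in> insert a J" "j \<in> insert a J" for i j
    using psd that unfolding psd_on_def by blast
  define Y where "Y i j = X i j - X i a * X a j / X a a" for i j
  have "psd_on J Y"
    unfolding Y_def using psd_on_schur_complement[OF psd insert.hyps(2,1)] .
  then obtain u where u: "\<forall>i\<in>J. \<forall>j\<in>J. (\<Sum>k\<in>J. u i k * u j k) = Y i j"
    using insert.IH by blast
  define s where "s = sqrt (X a a)"
  have ss: "s * s = X a a" using psd_on_diag_nonneg[OF psd fin] by (simp add: s_def)
  define v where "v i k = (if k = a then X i a / s else if i = a then 0 else u i k)" for i k
  show ?case
  proof (intro exI ballI)
    fix i j assume ij: "i \<in> insert a J" "j \<in> insert a J"
    have "(\<Sum>k\<in>insert a J. v i k * v j k) = X i a / s * (X j a / s) + (\<Sum>k\<in>J. v i k * v j k)"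
      using insert.hyps by (simp add: v_def)
    also have "X i a / s * (X j a / s) = X i a * X j a / X a a"
      unfolding ss[symmetric] by (rule times_divide_times_eq)
    also have "(\<Sum>k\<in>J. v i k * v j k) = (\<Sum>k\<in>J. if i = a \<or> j = a then 0 else u i k * u j k)"
      using insert.hyps(2) by (intro sum.cong refl) (auto simp: v_def)
    also have "\<dots> = (if i = a \<or> j = a then 0 else Y i j)"
      using u ij by auto
    also have "X i a * X j a / X a a + (if i = a \<or> j = a then 0 else Y i j) = X i j"
      using psd_on_pivot[OF psd fin insertI1 ij] ij sym[of j a] by (auto simp: Y_def)
    finally show "(\<Sum>k\<in>insert a J. v i k * v j k) = X i j" .
  qed
qed

lemma inf_one_norm_weighted_le_spectral_pnorm:
  assumes p: "p > 0" and mn: "0 < m" "0 < n"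
    and r: "vec_pnorm p m r \<le> 1" and s: "vec_pnorm p n s \<le> 1"
  shows "inf_one_norm m n (\<lambda>i j. r i * Z i j * s j) \<le> spectral_pnorm p m n Z"
  unfolding inf_one_norm_def
proof (rule cSup_least)
  show "{(\<Sum>i<m. \<Sum>j<n. r i * Z i j * s j * e i * f j) | e f.
      (\<forall>i<m. e i \<in> {-1, 1}) \<and> (\<forall>j<n. f j \<in> {-1, 1})} \<noteq> {}"
    by (rule ex_in_conv[THEN iffD1], rule exI, rule CollectI, rule exI[of _ "\<lambda>_. 1"],
        rule exI[of _ "\<lambda>_. 1"]) simp
next
  fix v assume "v \<in> {(\<Sum>i<m. \<Sum>j<n. r i * Z i j * s j * e i * f j) | e f.
      (\<forall>i<m. e i \<in> {-1, 1}) \<and> (\<forall>j<n. f j \<in> {-1, 1})}"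
  then obtain e f where v: "v = (\<Sum>i<m. \<Sum>j<n. r i * Z i j * s j * e i * f j)"
    and "\<forall>i<m. e i \<in> {-1, 1}" "\<forall>j<n. f j \<in> {-1, 1 :: real}" by blast
  then have e: "\<And>i. i < m \<Longrightarrow> \<bar>e i\<bar> = 1" and f: "\<And>j. j < n \<Longrightarrow> \<bar>f j\<bar> = 1" by auto
  have "v = mat_bilinear m n (\<lambda>i. r i * e i) Z (\<lambda>j. s j * f j)"
    unfolding v mat_bilinear_def by (simp add: mult_ac)
  also have "\<dots> \<le> spectral_pnorm p m n Z"
    using r s by (intro mat_bilinear_le_spectral_pnorm_ball[OF p mn]) (simp_all add: vec_pnorm_mult_sign e f)
  finally show "v \<le> spectral_pnorm p m n Z" .
qed

section \<open>The norms \<open>p\<^sub>v\<close> and \<open>p\<^sub>u\<close>\<close>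

definition pv_objective :: "nat \<Rightarrow> nat \<Rightarrow> (nat \<Rightarrow> nat \<Rightarrow> real) \<Rightarrow> (nat \<Rightarrow> nat \<Rightarrow> real) \<Rightarrow> real" where
  "pv_objective m n Z X =
     (\<Sum>i<m. \<Sum>j<n. Z i j / 2 * X i (m + j)) + (\<Sum>j<n. \<Sum>i<m. Z i j / 2 * X (m + j) i)"

definition pv_feasible :: "real \<Rightarrow> nat \<Rightarrow> nat \<Rightarrow> (nat \<Rightarrow> nat \<Rightarrow> real) \<Rightarrow> bool" where
  "pv_feasible p m n X \<longleftrightarrow> psd (m + n) X \<and>
     (\<Sum>i<m. \<bar>X i i\<bar> powr (p / 2)) \<le> 1 \<and> (\<Sum>j<n. \<bar>X (m + j) (m + j)\<bar> powr (p / 2)) \<le> 1"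

lemma pv_norm_eq_Sup: "pv_norm p m n Z = Sup {pv_objective m n Z X | X. pv_feasible p m n X}"
  unfolding pv_norm_def pv_objective_def pv_feasible_def ..

lemma pv_feasible_zero: "pv_feasible p m n (\<lambda>_ _. 0)"
  unfolding pv_feasible_def psd_def by simp

lemma pv_objective_symmetric:
  assumes "\<And>i j. i < m \<Longrightarrow> j < n \<Longrightarrow> X (m + j) i = X i (m + j)"
  shows "pv_objective m n Z X = (\<Sum>i<m. \<Sum>j<n. Z i j * X i (m + j))"
proof -
  have "(\<Sum>j<n. \<Sum>i<m. Z i j / 2 * X (m + j) i) = (\<Sum>i<m. \<Sum>j<n. Z i j / 2 * X i (m + j))"
    using assms by (subst sum.swap) (intro sum.cong refl, simp)
  then show ?thesis unfolding pv_objective_def by (simp add: sum.distrib[symmetric])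
qed

lemma psd_normalized_gram_factorization:
  assumes "psd N X" "0 < N"
  obtains w where "\<And>i. i < N \<Longrightarrow> vec_dot N (w i) (w i) = 1"
    and "\<And>i j. i < N \<Longrightarrow> j < N \<Longrightarrow> X i j = sqrt (X i i) * sqrt (X j j) * vec_dot N (w i) (w j)"
proof -
  have "psd_on {..<N} X" using assms(1) by (simp add: psd_iff_psd_on)
  then obtain u where "\<forall>i\<in>{..<N}. \<forall>j\<in>{..<N}. (\<Sum>k\<in>{..<N}. u i k * u j k) = X i j"
    using psd_on_gram_factorization[OF finite_lessThan] by blast
  then have u: "X i j = vec_dot N (u i) (u j)" if "i < N" "j < N" for i j
    using that by (simp add: vec_dot_def)
  define w where "w i = normalized N (u i)" for i
  have "X i j = sqrt (X i i) * sqrt (X j j) * vec_dot N (w i) (w j)" if "i < N" "j < N" for i j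
  proof -
    have "X i j = (\<Sum>k<N. (sqrt (X i i) * w i k) * (sqrt (X j j) * w j k))"
      unfolding u[OF that] vec_dot_def
    proof (intro sum.cong refl)
      fix k assume "k \<in> {..<N}"
      then show "u i k * u j k = (sqrt (X i i) * w i k) * (sqrt (X j j) * w j k)"
        using normalized_scale[of k N "u i"] normalized_scale[of k N "u j"]
          u[OF that(1) that(1)] u[OF that(2) that(2)]
        by (simp add: w_def)
    qed
    then show ?thesis by (simp add: vec_dot_def sum_distrib_left mult_ac)
  qed
  moreover have "vec_dot N (w i) (w i) = 1" for i
    using vec_dot_normalized[OF assms(2)] by (simp add: w_def)
  ultimately show ?thesis using that by blast
qed

text \<open>Factor the feasible \<open>X\<close> as a Gram matrix \<open>X i j = r i * r j * \<langle>w i, w j\<rangle>\<close> with unit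
  vectors \<open>w i\<close>; the Grothendieck inequality then bounds the objective by the
  \<open>\<infinity>\<rightarrow>1\<close> norm of the matrix \<open>r i * Z i j * r (m + j)\<close>, whose weights have \<open>p\<close>-norm at most 1.\<close>
lemma pv_objective_le_spectral_pnorm:
  assumes K: "K \<in> grothendieck_bounds" and p: "p > 0" and mn: "0 < m" "0 < n"
    and X: "pv_feasible p m n X"
  shows "pv_objective m n Z X \<le> K * spectral_pnorm p m n Z"
proof -
  define N where "N = m + n"
  have N: "0 < N" using mn by (simp add: N_def)
  have psd: "psd N X" using X by (simp add: pv_feasible_def N_def)
  obtain w where w: "\<And>i. i < N \<Longrightarrow> vec_dot N (w i) (w i) = 1"
    and X_factor: "\<And>i j. i < N \<Longrightarrow> j < N \<Longrightarrow> X i j = sqrt (X i i) * sqrt (X j j) * vec_dot N (w i) (w j)"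
    using psd_normalized_gram_factorization[OF psd N] by blast
  define r where "r i = sqrt (X i i)" for i
  have weight: "vec_pnorm p k (\<lambda>i. r (l + i)) \<le> 1"
    if "l + k \<le> N" "(\<Sum>i<k. \<bar>X (l + i) (l + i)\<bar> powr (p / 2)) \<le> 1" for k l
  proof -
    have "(\<Sum>i<k. \<bar>r (l + i)\<bar> powr p) = (\<Sum>i<k. \<bar>X (l + i) (l + i)\<bar> powr (p / 2))"
    proof (intro sum.cong refl)
      fix i assume "i \<in> {..<k}"
      then have "0 \<le> X (l + i) (l + i)"
        using that psd_on_diag_nonneg[OF psd[unfolded psd_iff_psd_on] finite_lessThan] by simp
      then show "\<bar>r (l + i)\<bar> powr p = \<bar>X (l + i) (l + i)\<bar> powr (p / 2)"
        by (simp add: r_def sqrt_powr)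
    qed
    then show ?thesis using that by (intro vec_pnorm_le_one[OF p]) simp
  qed
  have "pv_objective m n Z X = (\<Sum>i<m. \<Sum>j<n. Z i j * X i (m + j))"
    using psd unfolding psd_def N_def by (intro pv_objective_symmetric) auto
  also have "\<dots> = (\<Sum>i<m. \<Sum>j<n. (r i * Z i j * r (m + j)) * vec_dot N (w i) (w (m + j)))"
  proof (intro sum.cong refl)
    fix i j assume "i \<in> {..<m}" "j \<in> {..<n}"
    then have "i < N" "m + j < N" by (auto simp: N_def)
    from X_factor[OF this]
    show "Z i j * X i (m + j) = (r i * Z i j * r (m + j)) * vec_dot N (w i) (w (m + j))"
      by (simp add: r_def mult_ac)
  qed
  also have "\<dots> \<le> K * inf_one_norm m n (\<lambda>i j. r i * Z i j * r (m + j))"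
    using w K[unfolded grothendieck_bounds_iff, rule_format, where m = m and n = n and d = N
        and a = "\<lambda>i j. r i * Z i j * r (m + j)" and u = w and v = "\<lambda>j. w (m + j)"]
    by (simp add: N_def)
  also have "\<dots> \<le> K * spectral_pnorm p m n Z"
    using X weight[of 0 m] weight[of m n] one_le_grothendieck_bound[OF K]
    unfolding pv_feasible_def N_def
    by (intro mult_left_mono inf_one_norm_weighted_le_spectral_pnorm[OF p mn]) auto
  finally show ?thesis .
qed

lemma pv_norm_le_spectral_pnorm:
  assumes "K \<in> grothendieck_bounds" "p > 0" "0 < m" "0 < n"
  shows "pv_norm p m n Z \<le> K * spectral_pnorm p m n Z"
  unfolding pv_norm_eq_Sup using pv_feasible_zero pv_objective_le_spectral_pnorm[OF assms]
  by (intro cSup_least) blast+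

lemma spectral_pnorm_le_pv_norm:
  assumes p: "p > 0" and mn: "0 < m" "0 < n"
  shows "spectral_pnorm p m n Z \<le> pv_norm p m n Z"
proof (rule spectral_pnorm_le[OF mn])
  fix x y assume x: "vec_pnorm p m x = 1" and y: "vec_pnorm p n y = 1"
  define w where "w k = (if k < m then x k else y (k - m))" for k
  define X where "X a b = w a * w b" for a b
  have sq: "(v * v) powr (p / 2) = \<bar>v\<bar> powr p" for v :: real
    using sqrt_powr[of "v * v" p] by simp
  have "(\<Sum>i<m+n. \<Sum>j<m+n. z i * X i j * z j) = (\<Sum>i<m+n. z i * w i)\<^sup>2" for z
    unfolding X_def power2_eq_square sum_product by (simp add: mult_ac)
  then have "psd (m + n) X" unfolding psd_def by (simp add: X_def)
  then have "pv_feasible p m n X"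
    unfolding pv_feasible_def
    using sum_abs_powr_eq_one[OF x p] sum_abs_powr_eq_one[OF y p] by (simp add: X_def w_def sq)
  then have "pv_objective m n Z X \<le> pv_norm p m n Z"
    unfolding pv_norm_eq_Sup
    using pv_objective_le_spectral_pnorm[OF weak_grothendieck_inequality p mn]
    by (intro cSup_upper bdd_aboveI) blast+
  moreover have "pv_objective m n Z X = mat_bilinear m n x Z y"
    by (subst pv_objective_symmetric) (simp_all add: X_def w_def mat_bilinear_def mult_ac)
  ultimately show "mat_bilinear m n x Z y \<le> pv_norm p m n Z" by simp
qed

lemma pv_norm_zero: "pv_norm p m n (\<lambda>_ _. 0) = 0"
proof -
  have "{pv_objective m n (\<lambda>_ _. 0) X | X. pv_feasible p m n X} = {0}"
    using pv_feasible_zero by (auto simp: pv_objective_def)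
  then show ?thesis unfolding pv_norm_eq_Sup by simp
qed

lemma mat_inner_le_nuclear_pnorm:
  assumes "p > 0" "0 < m" "0 < n" "spectral_pnorm p m n Z \<le> 1"
  shows "mat_inner m n A Z \<le> nuclear_pnorm p m n A"
proof -
  have "mat_inner m n A Z \<le> spectral_pnorm p m n Z * nuclear_pnorm p m n A"
    by (rule mat_inner_le_spectral_pnorm_nuclear_pnorm[OF assms(1-3)])
  also have "\<dots> \<le> 1 * nuclear_pnorm p m n A"
    by (rule mult_right_mono[OF assms(4) nuclear_pnorm_nonneg[OF assms(3)]])
  finally show ?thesis by simp
qed

lemma mat_inner_le_nuclear_pnorm_if_pv_norm_le_one:
  assumes "p > 0" "0 < m" "0 < n" "pv_norm p m n Z \<le> 1"
  shows "mat_inner m n A Z \<le> nuclear_pnorm p m n A"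
  using spectral_pnorm_le_pv_norm[OF assms(1-3), of Z] assms(4)
  by (intro mat_inner_le_nuclear_pnorm[OF assms(1-3)]) simp

lemma pu_norm_upper:
  assumes "p > 0" "0 < m" "0 < n" "pv_norm p m n Z \<le> 1"
  shows "mat_inner m n A Z \<le> pu_norm p m n A"
  unfolding pu_norm_def
  using assms(4) mat_inner_le_nuclear_pnorm_if_pv_norm_le_one[OF assms(1-3)]
  by (intro cSup_upper bdd_aboveI) blast+

lemma pu_norm_nonneg:
  assumes "p > 0" "0 < m" "0 < n"
  shows "0 \<le> pu_norm p m n A"
  using pu_norm_upper[OF assms, of "\<lambda>_ _. 0"] by (simp add: pv_norm_zero mat_inner_def)

lemma pu_norm_le_nuclear_pnorm:
  assumes "p > 0" "0 < m" "0 < n"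
  shows "pu_norm p m n A \<le> nuclear_pnorm p m n A"
proof -
  have "mat_inner m n A (\<lambda>_ _. 0) \<in> {mat_inner m n A Z | Z. pv_norm p m n Z \<le> 1}"
    by (intro CollectI exI[of _ "\<lambda>_ _. 0"]) (simp add: pv_norm_zero)
  then show ?thesis
    unfolding pu_norm_def using mat_inner_le_nuclear_pnorm_if_pv_norm_le_one[OF assms]
    by (intro cSup_least) blast+
qed

text \<open>Scaling a norming dual matrix \<open>Z\<close> of \<open>A\<close> down by \<open>K\<close> makes it feasible for the
  \<open>p\<^sub>u\<close> norm.\<close>
lemma nuclear_pnorm_le_pu_norm:
  assumes K: "K \<in> grothendieck_bounds" and p: "p > 0" and mn: "0 < m" "0 < n"
  shows "nuclear_pnorm p m n A \<le> K * pu_norm p m n A"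
proof -
  have K1: "1 \<le> K" by (rule one_le_grothendieck_bound[OF K])
  obtain Z where Z: "spectral_pnorm p m n Z \<le> 1" "mat_inner m n A Z = nuclear_pnorm p m n A"
    using nuclear_pnorm_attained_by_dual[OF p mn] by blast
  define Z' where "Z' i j = Z i j / K" for i j
  have "spectral_pnorm p m n Z' \<le> 1 / K"
  proof (rule spectral_pnorm_le[OF mn])
    fix x y assume u: "vec_pnorm p m x = 1" "vec_pnorm p n y = 1"
    have "mat_bilinear m n x Z' y = mat_bilinear m n x Z y / K"
      unfolding mat_bilinear_def Z'_def by (simp add: sum_divide_distrib)
    also have "\<dots> \<le> 1 / K"
      using mat_bilinear_le_spectral_pnorm[OF p u, of Z] Z(1) K1 by (intro divide_right_mono) auto
    finally show "mat_bilinear m n x Z' y \<le> 1 / K" .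
  qed
  then have "K * spectral_pnorm p m n Z' \<le> 1"
    using K1 by (simp add: le_divide_eq mult.commute)
  then have "mat_inner m n A Z' \<le> pu_norm p m n A"
    using pv_norm_le_spectral_pnorm[OF K p mn, of Z'] by (intro pu_norm_upper[OF p mn]) simp
  moreover have "mat_inner m n A Z' = nuclear_pnorm p m n A / K"
    using Z(2) unfolding mat_inner_def Z'_def by (simp add: sum_divide_distrib[symmetric])
  ultimately show ?thesis using K1 by (simp add: divide_le_eq mult.commute)
qed

lemma le_cInf_mult:
  fixes S :: "real set"
  assumes "S \<noteq> {}" "\<And>K. K \<in> S \<Longrightarrow> a \<le> K * b" "0 \<le> b"
  shows "a \<le> Inf S * b"
proof (cases "b = 0")
  case True
  from assms(1) obtain K where "K \<in> S" by blast
  with assms(2)[of K] True show ?thesis by simp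
next
  case False
  with assms(3) have b: "b > 0" by simp
  with assms(1,2) have "a / b \<le> Inf S" by (intro cInf_greatest) (simp_all add: divide_le_eq)
  with b show ?thesis by (simp add: divide_le_eq)
qed

theorem lemma3p2:
  fixes A :: "nat \<Rightarrow> nat \<Rightarrow> real" and m n :: nat and p :: real
  assumes "0 < m" and "0 < n" and "p \<in> \<rat>" and "2 < p"
  shows "(\<exists>Z. spectral_pnorm p m n Z \<le> 1 \<and> mat_inner m n A Z = nuclear_pnorm p m n A)
    \<and> (\<forall>Z. spectral_pnorm p m n Z \<le> 1 \<longrightarrow> mat_inner m n A Z \<le> nuclear_pnorm p m n A)
    \<and> pu_norm p m n A \<le> nuclear_pnorm p m n A
    \<and> nuclear_pnorm p m n A \<le> grothendieck_const * pu_norm p m n A"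
proof -
  \<comment> \<open>only \<open>p > 0\<close> is used\<close>
  have p: "0 < p" using \<open>2 < p\<close> by simp
  note mn = \<open>0 < m\<close> \<open>0 < n\<close>
  show ?thesis
  proof (intro conjI allI impI)
    show "\<exists>Z. spectral_pnorm p m n Z \<le> 1 \<and> mat_inner m n A Z = nuclear_pnorm p m n A"
      by (rule nuclear_pnorm_attained_by_dual[OF p mn])
    show "mat_inner m n A Z \<le> nuclear_pnorm p m n A" if "spectral_pnorm p m n Z \<le> 1" for Z
      by (rule mat_inner_le_nuclear_pnorm[OF p mn that])
    show "pu_norm p m n A \<le> nuclear_pnorm p m n A"
      by (rule pu_norm_le_nuclear_pnorm[OF p mn])
    show "nuclear_pnorm p m n A \<le> grothendieck_const * pu_norm p m n A"
      unfolding grothendieck_const_eq_Inf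
      using weak_grothendieck_inequality nuclear_pnorm_le_pu_norm[OF _ p mn] pu_norm_nonneg[OF p mn]
      by (intro le_cInf_mult) auto
  qed
qed

end
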